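(* Let $X$ be a compact smooth $n$-dimensional manifold and $P$ an $h$-differential operator on $X$ of the form $\sum_{|\alpha|\le m}a_\alpha(x;h)(hD_x)^\alpha$ in local coordinates, with coefficients uniformly bounded in $C^\infty$, $a_\alpha=a_\alpha^0+\mathcal{O}(h)$ in $C^\infty$, $a_\alpha$ independent of $h$ for $|\alpha|=m$, and classically elliptic: $|\sum_{|\alpha|=m}a_\alpha(x)\xi^\alpha|\ge\frac1C|\xi|^m$. Let $p(x,\xi)=\sum_{|\alpha|\le m}a^0_\alpha(x)\xi^\alpha$, fix $z\in\mathbb{C}$, let $s=|p-z|^2$, and for $0<\alpha\ll1$ let $\Lambda=\left(\frac{\alpha+s}{1+s}\right)^{1/2}$. Let $w\in\mathbb{C}$ with $|w|\le C_0$ and $\Im w\neq0$. Then for all $\ell\in\mathbb{R}$ and $\widetilde\alpha,\beta\in\mathbb{N}^n$ there exists $J\in\mathbb{N}$ such that, in canonical coordinates $(x,\xi)$ associated with any local coordinates, $$\partial_x^{\widetilde\alpha}\partial_\xi^\beta\Big(w-\frac s\alpha\Big)^\ell=\mathcal{O}(1)\Big(1+\frac s\alpha\Big)^\ell\Lambda^{-|\widetilde\alpha|-|\beta|}\langle\xi\rangle^{-|\beta|}|\Im w|^{-J},$$ uniformly in $\xi$, $\alpha$, $w$ and locally uniformly in $x$.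
   Context: $\langle\xi\rangle=(1+|\xi|^2)^{1/2}$. For non-integer $\ell$, the power is taken with a branch of the logarithm defined on the half-plane containing $w-s/\alpha$ (which has the same nonzero imaginary part as $w$). *)

theory Defs
  imports "HOL-Analysis.Analysis"
begin

definition dirderiv :: "('a::real_normed_vector \<Rightarrow> 'b::real_normed_vector) \<Rightarrow> 'a \<Rightarrow> 'a \<Rightarrow> 'b" where
  "dirderiv f v x = vector_derivative (\<lambda>t::real. f (x + t *\<^sub>R v)) (at 0)"

fun iter_dirderiv :: "('a::real_normed_vector \<Rightarrow> 'b::real_normed_vector) \<Rightarrow> 'a list \<Rightarrow> 'a \<Rightarrow> 'b" where
  "iter_dirderiv f [] = f"
| "iter_dirderiv f (v # vs) = dirderiv (iter_dirderiv f vs) v"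

definition smooth_on :: "'a::real_normed_vector set \<Rightarrow> ('a \<Rightarrow> 'b::real_normed_vector) \<Rightarrow> bool" where
  "smooth_on U f \<longleftrightarrow> (\<forall>vs. iter_dirderiv f vs differentiable_on U)"

definition mono :: "real^'n \<Rightarrow> ('n::finite \<Rightarrow> nat) \<Rightarrow> complex" where
  "mono \<xi> \<beta> = (\<Prod>i\<in>UNIV. (complex_of_real (\<xi> $ i)) ^ (\<beta> i))"

definition symb :: "(('n::finite \<Rightarrow> nat) \<Rightarrow> real^'n \<Rightarrow> complex) \<Rightarrow> nat \<Rightarrow> real^'n \<Rightarrow> real^'n \<Rightarrow> complex" where
  "symb a m x \<xi> = (\<Sum>\<beta>\<in>{\<beta>. sum \<beta> UNIV \<le> m}. a \<beta> x * mono \<xi> \<beta>)"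

definition princ :: "(('n::finite \<Rightarrow> nat) \<Rightarrow> real^'n \<Rightarrow> complex) \<Rightarrow> nat \<Rightarrow> real^'n \<Rightarrow> real^'n \<Rightarrow> complex" where
  "princ a m x \<xi> = (\<Sum>\<beta>\<in>{\<beta>. sum \<beta> UNIV = m}. a \<beta> x * mono \<xi> \<beta>)"

definition sfun :: "(('n::finite \<Rightarrow> nat) \<Rightarrow> real^'n \<Rightarrow> complex) \<Rightarrow> nat \<Rightarrow> complex \<Rightarrow> real^'n \<Rightarrow> real^'n \<Rightarrow> real" where
  "sfun a m z x \<xi> = (cmod (symb a m x \<xi> - z))\<^sup>2"

definition Lam :: "real \<Rightarrow> real \<Rightarrow> real" where
  "Lam \<alpha> s = sqrt ((\<alpha> + s) / (1 + s))"

definition jbr :: "real^'n \<Rightarrow> real" where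
  "jbr \<xi> = sqrt (1 + (norm \<xi>)\<^sup>2)"

definition dx :: "'n::finite \<Rightarrow> (real^'n) \<times> (real^'n)" where
  "dx i = (axis i 1, 0)"
definition dxi :: "'n::finite \<Rightarrow> (real^'n) \<times> (real^'n)" where
  "dxi i = (0, axis i 1)"

end

theory Submission
  imports Defs
begin

text \<open>
  Write s = |p - z|^2 = (p - z) * cnj (p - z). Since p - z is a symbol of order m (x-derivatives are
  bounded, each \<xi>-derivative gains a factor 1/jbr \<xi>), the Leibniz rule bounds a derivative of s of
  order k \<ge> 1 by sqrt s * jbr \<xi>^m, plus jbr \<xi>^(2m) if k \<ge> 2, times 1/jbr \<xi> for each
  \<xi>-derivative. Ellipticity gives jbr \<xi>^(2m) \<le> E (1 + s), which makes both terms
  O((\<alpha> + s) \<Lambda>^(-k)); so each derivative of s/\<alpha> costs a factor 1/\<Lambda> on top of the size 1 + s/\<alpha>.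
  Derivatives of (w - s/\<alpha>)^l are then estimated by induction on their number, for all l
  simultaneously: one derivative gives l (w - s/\<alpha>)^(l - 1) times a derivative of s/\<alpha>, and the
  Leibniz rule distributes the others. Finally |w - s/\<alpha>| \<ge> |Im w| and |w| \<le> C0 compare powers
  of w - s/\<alpha> with those of 1 + s/\<alpha>, at the cost of a power of 1/|Im w|.
\<close>

section \<open>Iterated directional derivatives\<close>

lemma iter_dirderiv_append:
  "iter_dirderiv f (vs @ ws) = iter_dirderiv (iter_dirderiv f ws) vs"
  by (induction vs) auto

lemma dirderiv_at:
  assumes "(f has_derivative f') (at x)"
  shows "dirderiv f v x = f' v"
proof -
  have "((\<lambda>t::real. x + t *\<^sub>R v) has_derivative (\<lambda>t. t *\<^sub>R v)) (at 0)"
    by (auto intro!: derivative_eq_intros)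
  then have "((\<lambda>t::real. f (x + t *\<^sub>R v)) has_derivative (\<lambda>t. f' (t *\<^sub>R v))) (at 0)"
    using has_derivative_compose[of "\<lambda>t::real. x + t *\<^sub>R v" "\<lambda>t. t *\<^sub>R v" 0 UNIV f f'] assms
    by (simp add: o_def)
  moreover have "linear f'"
    using assms has_derivative_bounded_linear bounded_linear.linear by blast
  ultimately have "((\<lambda>t::real. f (x + t *\<^sub>R v)) has_vector_derivative f' v) (at 0)"
    unfolding has_vector_derivative_def by (simp add: linear_scale)
  then show ?thesis
    unfolding dirderiv_def by (rule vector_derivative_at)
qed

lemma dirderiv_cong_open:
  assumes "open S" "x \<in> S" "\<And>y. y \<in> S \<Longrightarrow> f y = g y"
  shows "dirderiv f v x = dirderiv g v x"
proof -
  let ?T = "{t::real. x + t *\<^sub>R v \<in> S}"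
  have "continuous_on UNIV (\<lambda>t::real. x + t *\<^sub>R v)"
    by (intro continuous_intros)
  from open_vimage[OF assms(1) this] have T: "open ?T"
    by (simp add: vimage_def)
  have T0: "0 \<in> ?T"
    using assms by simp
  have "\<And>D. ((\<lambda>t. f (x + t *\<^sub>R v)) has_vector_derivative D) (at 0) \<longleftrightarrow>
             ((\<lambda>t. g (x + t *\<^sub>R v)) has_vector_derivative D) (at 0)"
    using has_vector_derivative_transform_within_open[OF _ T T0] assms(3)
    by (metis (no_types, lifting) mem_Collect_eq)
  then show ?thesis
    unfolding dirderiv_def vector_derivative_def by simp
qed

lemma iter_dirderiv_cong_open:
  assumes "open S" "x \<in> S" "\<And>y. y \<in> S \<Longrightarrow> f y = g y"
  shows "iter_dirderiv f vs x = iter_dirderiv g vs x"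
  using assms(2)
proof (induction vs arbitrary: x)
  case (Cons v vs)
  have "dirderiv (iter_dirderiv f vs) v x = dirderiv (iter_dirderiv g vs) v x"
    by (rule dirderiv_cong_open[OF assms(1) Cons.prems]) (use Cons.IH in blast)
  then show ?case by simp
qed (use assms in simp)

lemma dirderiv_const [simp]: "dirderiv (\<lambda>_. c) v x = 0"
  unfolding dirderiv_def by (simp add: vector_derivative_at)

lemma iter_dirderiv_const_Cons: "iter_dirderiv (\<lambda>_. c) (v # vs) = (\<lambda>_. 0)"
proof (induction vs arbitrary: v)
  case (Cons w vs)
  then show ?case
    by (simp only: iter_dirderiv.simps(2)[of _ v] Cons.IH) (simp add: fun_eq_iff)
qed (simp add: fun_eq_iff)

lemma iter_dirderiv_zero_dir:
  assumes "0 \<in> set vs"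
  shows "iter_dirderiv f vs x = 0"
proof -
  obtain vs1 vs2 where "vs = vs1 @ 0 # vs2"
    using assms by (meson split_list)
  then have "iter_dirderiv f vs = iter_dirderiv (dirderiv (iter_dirderiv f vs2) 0) vs1"
    by (simp add: iter_dirderiv_append)
  also have "dirderiv (iter_dirderiv f vs2) 0 = (\<lambda>_. 0)"
    unfolding dirderiv_def by (simp add: fun_eq_iff vector_derivative_at)
  finally show ?thesis
    by (cases vs1) (simp_all add: iter_dirderiv_const_Cons del: iter_dirderiv.simps(2))
qed

lemma iter_dirderiv_bounded_linear:
  assumes "bounded_linear f"
  shows "iter_dirderiv f ws =
           (if ws = [] then f else if length ws = 1 then (\<lambda>_. f (hd ws)) else (\<lambda>_. 0))"
proof (cases ws rule: rev_cases)
  case (snoc ws' v)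
  have "dirderiv f v = (\<lambda>_. f v)"
    using dirderiv_at[OF bounded_linear_imp_has_derivative[OF assms]] by (simp add: fun_eq_iff)
  then have "iter_dirderiv f ws = iter_dirderiv (\<lambda>_. f v) ws'"
    using snoc by (simp add: iter_dirderiv_append)
  then show ?thesis
    using snoc by (cases ws') (auto simp: iter_dirderiv_const_Cons simp del: iter_dirderiv.simps(2))
qed simp

lemma iter_dirderiv_fst:
  "iter_dirderiv (\<lambda>p. a (fst p)) ws p = iter_dirderiv a (map fst ws) (fst p)"
proof (induction ws arbitrary: p)
  case (Cons v ws)
  have "iter_dirderiv (\<lambda>p. a (fst p)) ws = (\<lambda>p. iter_dirderiv a (map fst ws) (fst p))"
    using Cons.IH by (simp add: fun_eq_iff)
  then show ?case
    by (simp add: dirderiv_def)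
qed simp

lemma dirderiv_add:
  assumes "f differentiable (at x)" "g differentiable (at x)"
  shows "dirderiv (\<lambda>y. f y + g y) v x = dirderiv f v x + dirderiv g v x"
proof -
  obtain f' g' where f: "(f has_derivative f') (at x)" and g: "(g has_derivative g') (at x)"
    using assms unfolding differentiable_def by blast
  show ?thesis
    using dirderiv_at[OF has_derivative_add[OF f g]] dirderiv_at[OF f] dirderiv_at[OF g] by simp
qed

lemma dirderiv_mult:
  fixes f g :: "'a::real_normed_vector \<Rightarrow> 'b::real_normed_algebra"
  assumes "f differentiable (at x)" "g differentiable (at x)"
  shows "dirderiv (\<lambda>y. f y * g y) v x = dirderiv f v x * g x + f x * dirderiv g v x"
proof -
  obtain f' g' where f: "(f has_derivative f') (at x)" and g: "(g has_derivative g') (at x)"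
    using assms unfolding differentiable_def by blast
  show ?thesis
    using dirderiv_at[OF has_derivative_mult[OF f g]] dirderiv_at[OF f] dirderiv_at[OF g]
    by (simp add: add.commute)
qed

lemma dirderiv_linear:
  assumes "bounded_linear L" "f differentiable (at x)"
  shows "dirderiv (\<lambda>y. L (f y)) v x = L (dirderiv f v x)"
proof -
  obtain f' where f: "(f has_derivative f') (at x)"
    using assms unfolding differentiable_def by blast
  show ?thesis
    using dirderiv_at[OF bounded_linear.has_derivative[OF assms(1) f]] dirderiv_at[OF f] by simp
qed

lemma dirderiv_powr:
  fixes f :: "'a::real_normed_vector \<Rightarrow> complex"
  assumes "f differentiable (at x)" "f x \<notin> \<real>\<^sub>\<le>\<^sub>0"
  shows "dirderiv (\<lambda>y. f y powr c) v x = c * f x powr (c - 1) * dirderiv f v x"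
proof -
  obtain f' where f: "(f has_derivative f') (at x)"
    using assms unfolding differentiable_def by blast
  have "((\<lambda>y. f y powr c) has_derivative (\<lambda>h. c * f x powr (c - 1) * f' h)) (at x)"
    using has_derivative_compose[OF f has_field_derivative_powr[OF assms(2), unfolded has_field_derivative_def]]
    by (simp add: o_def mult.commute)
  from dirderiv_at[OF this] dirderiv_at[OF f] show ?thesis
    by simp
qed

lemma smooth_on_imp_differentiable_on: "smooth_on S f \<Longrightarrow> iter_dirderiv f ws differentiable_on S"
  unfolding smooth_on_def by blast

lemma smooth_on_iter_dirderiv: "smooth_on S f \<Longrightarrow> smooth_on S (iter_dirderiv f ws)"
  unfolding smooth_on_def by (metis iter_dirderiv_append)

lemma differentiable_on_cong:
  assumes "\<And>x. x \<in> S \<Longrightarrow> f x = g x" "g differentiable_on S"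
  shows "f differentiable_on S"
  unfolding differentiable_on_def differentiable_def
proof
  fix x assume x: "x \<in> S"
  then obtain D where "(g has_derivative D) (at x within S)"
    using assms(2) unfolding differentiable_on_def differentiable_def by blast
  then have "(f has_derivative D) (at x within S)"
    using has_derivative_transform[of x S f g D] x assms(1) by blast
  then show "\<exists>D. (f has_derivative D) (at x within S)" by blast
qed

lemma smooth_on_const: "smooth_on S (\<lambda>_. c)"
  unfolding smooth_on_def
proof
  fix vs
  show "iter_dirderiv (\<lambda>_. c) vs differentiable_on S"
    by (cases vs) (simp_all add: iter_dirderiv_const_Cons del: iter_dirderiv.simps(2))
qed

lemma iter_dirderiv_linear:
  assumes "bounded_linear L" "open S" "smooth_on S f" "x \<in> S"
  shows "iter_dirderiv (\<lambda>y. L (f y)) vs x = L (iter_dirderiv f vs x)"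
  using assms(4)
proof (induction vs arbitrary: x)
  case (Cons v vs)
  have "iter_dirderiv (\<lambda>y. L (f y)) (v # vs) x = dirderiv (\<lambda>y. L (iter_dirderiv f vs y)) v x"
    using dirderiv_cong_open[OF assms(2) Cons.prems, of "iter_dirderiv (\<lambda>y. L (f y)) vs"] Cons.IH by simp
  also have "\<dots> = L (iter_dirderiv f (v # vs) x)"
    using dirderiv_linear[OF assms(1), of "iter_dirderiv f vs" x v] Cons.prems assms(2)
      smooth_on_imp_differentiable_on[OF assms(3), of vs]
    by (simp add: differentiable_on_eq_differentiable_at)
  finally show ?case .
qed simp

lemma smooth_on_linear:
  assumes "bounded_linear L" "open S" "smooth_on S f"
  shows "smooth_on S (\<lambda>y. L (f y))"
  unfolding smooth_on_def
proof
  fix vs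
  have "(\<lambda>x. L (iter_dirderiv f vs x)) differentiable_on S"
    by (rule differentiable_on_compose[OF smooth_on_imp_differentiable_on[OF assms(3)]
          bounded_linear_imp_differentiable_on[OF assms(1)]])
  then show "iter_dirderiv (\<lambda>y. L (f y)) vs differentiable_on S"
    by (rule differentiable_on_cong[rotated]) (rule iter_dirderiv_linear[OF assms])
qed

lemma iter_dirderiv_add:
  assumes "open S" "smooth_on S f" "smooth_on S g" "x \<in> S"
  shows "iter_dirderiv (\<lambda>y. f y + g y) vs x = iter_dirderiv f vs x + iter_dirderiv g vs x"
  using assms(4)
proof (induction vs arbitrary: x)
  case (Cons v vs)
  have "iter_dirderiv (\<lambda>y. f y + g y) (v # vs) x = dirderiv (\<lambda>y. iter_dirderiv f vs y + iter_dirderiv g vs y) v x"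
    using dirderiv_cong_open[OF assms(1) Cons.prems, of "iter_dirderiv (\<lambda>y. f y + g y) vs"] Cons.IH by simp
  also have "\<dots> = iter_dirderiv f (v # vs) x + iter_dirderiv g (v # vs) x"
    using dirderiv_add[of "iter_dirderiv f vs" x "iter_dirderiv g vs" v] Cons.prems assms(1)
      smooth_on_imp_differentiable_on[OF assms(2), of vs] smooth_on_imp_differentiable_on[OF assms(3), of vs]
    by (simp add: differentiable_on_eq_differentiable_at)
  finally show ?case .
qed simp

lemma smooth_on_add:
  assumes "open S" "smooth_on S f" "smooth_on S g"
  shows "smooth_on S (\<lambda>y. f y + g y)"
  unfolding smooth_on_def
proof
  fix vs
  have "(\<lambda>x. iter_dirderiv f vs x + iter_dirderiv g vs x) differentiable_on S"
    using assms(2,3) by (intro differentiable_on_add smooth_on_imp_differentiable_on)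
  then show "iter_dirderiv (\<lambda>y. f y + g y) vs differentiable_on S"
    by (rule differentiable_on_cong[rotated]) (rule iter_dirderiv_add[OF assms])
qed

text \<open>All ways of distributing the entries of vs over two sublists: the index set of the Leibniz rule.\<close>
fun splits :: "'a list \<Rightarrow> ('a list \<times> 'a list) list" where
  "splits [] = [([], [])]"
| "splits (v # vs) = concat (map (\<lambda>(A, B). [(v # A, B), (A, v # B)]) (splits vs))"

lemma mset_splits: "(A, B) \<in> set (splits vs) \<Longrightarrow> mset A + mset B = mset vs"
  by (induction vs arbitrary: A B) auto

lemma length_splits: "(A, B) \<in> set (splits vs) \<Longrightarrow> length A + length B = length vs"
  by (metis mset_splits size_mset size_union)

lemma sum_list_splits_Cons:
  fixes v :: 'a
  shows "(\<Sum>(A, B)\<leftarrow>splits (v # vs). h A B) = (\<Sum>(A, B)\<leftarrow>splits vs. h (v # A) B + h A (v # B))"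
proof -
  have "(\<Sum>(A, B)\<leftarrow>concat (map (\<lambda>(A, B). [(v # A, B), (A, v # B)]) L). h A B) =
        (\<Sum>(A, B)\<leftarrow>L. h (v # A) B + h A (v # B))" for L :: "('a list \<times> 'a list) list"
    by (induction L) auto
  then show ?thesis
    by simp
qed

lemma differentiable_sum_list:
  assumes "\<And>e. e \<in> set L \<Longrightarrow> F e differentiable (at x)"
  shows "(\<lambda>y. \<Sum>e\<leftarrow>L. F e y) differentiable (at x)"
  using assms by (induction L) auto

lemma dirderiv_sum_list:
  assumes "\<And>e. e \<in> set L \<Longrightarrow> F e differentiable (at x)"
  shows "dirderiv (\<lambda>y. \<Sum>e\<leftarrow>L. F e y) v x = (\<Sum>e\<leftarrow>L. dirderiv (F e) v x)"
  using assms
proof (induction L)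
  case (Cons e L)
  then show ?case
    using dirderiv_add[of "F e" x "\<lambda>y. \<Sum>e\<leftarrow>L. F e y"] differentiable_sum_list[of L F x] by simp
qed simp

lemma iter_dirderiv_mult:
  fixes f g :: "'a::real_normed_vector \<Rightarrow> 'b::real_normed_algebra"
  assumes "open S" "x \<in> S"
    and "\<And>ws. length ws < length vs \<Longrightarrow>
           iter_dirderiv f ws differentiable_on S \<and> iter_dirderiv g ws differentiable_on S"
  shows "iter_dirderiv (\<lambda>y. f y * g y) vs x =
           (\<Sum>(A, B)\<leftarrow>splits vs. iter_dirderiv f A x * iter_dirderiv g B x)"
  using assms(2,3)
proof (induction vs arbitrary: x)
  case (Cons v vs)
  have diff: "iter_dirderiv f A differentiable (at y) \<and> iter_dirderiv g B differentiable (at y)"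
    if "(A, B) \<in> set (splits vs)" "y \<in> S" for A B y
    using length_splits[OF that(1)] Cons.prems(2)[of A] Cons.prems(2)[of B] that(2) assms(1)
    by (simp add: differentiable_on_eq_differentiable_at)
  have "iter_dirderiv (\<lambda>y. f y * g y) (v # vs) x =
          dirderiv (\<lambda>y. \<Sum>(A, B)\<leftarrow>splits vs. iter_dirderiv f A y * iter_dirderiv g B y) v x"
    using dirderiv_cong_open[OF assms(1) Cons.prems(1), of "iter_dirderiv (\<lambda>y. f y * g y) vs"]
      Cons.IH Cons.prems(2) by simp
  also have "\<dots> = (\<Sum>(A, B)\<leftarrow>splits vs. dirderiv (\<lambda>y. iter_dirderiv f A y * iter_dirderiv g B y) v x)"
  proof -
    have "(\<lambda>y. iter_dirderiv f (fst e) y * iter_dirderiv g (snd e) y) differentiable (at x)"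
      if "e \<in> set (splits vs)" for e
      using diff[of "fst e" "snd e" x] that Cons.prems(1) by (simp add: differentiable_mult)
    from dirderiv_sum_list[OF this] show ?thesis
      by (simp add: split_def)
  qed
  also have "\<dots> = (\<Sum>(A, B)\<leftarrow>splits vs. iter_dirderiv f (v # A) x * iter_dirderiv g B x
                                          + iter_dirderiv f A x * iter_dirderiv g (v # B) x)"
    using diff Cons.prems(1) by (intro arg_cong[where f = sum_list] map_cong) (auto simp: dirderiv_mult)
  also have "\<dots> = (\<Sum>(A, B)\<leftarrow>splits (v # vs). iter_dirderiv f A x * iter_dirderiv g B x)"
    by (rule sum_list_splits_Cons[symmetric])
  finally show ?case .
qed simp

lemma differentiable_on_iter_dirderiv_mult:
  fixes f g :: "'a::real_normed_vector \<Rightarrow> 'b::real_normed_algebra"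
  assumes "open S"
    and "\<And>ws. length ws \<le> length vs \<Longrightarrow>
           iter_dirderiv f ws differentiable_on S \<and> iter_dirderiv g ws differentiable_on S"
  shows "iter_dirderiv (\<lambda>y. f y * g y) vs differentiable_on S"
proof -
  have "(\<lambda>x. \<Sum>(A, B)\<leftarrow>splits vs. iter_dirderiv f A x * iter_dirderiv g B x) differentiable_on S"
    unfolding differentiable_on_eq_differentiable_at[OF assms(1)]
  proof
    fix x assume "x \<in> S"
    then have "(\<lambda>y. iter_dirderiv f A y * iter_dirderiv g B y) differentiable (at x)"
      if "(A, B) \<in> set (splits vs)" for A B
      using length_splits[OF that] assms by (intro differentiable_mult) (auto simp: differentiable_on_eq_differentiable_at)
    then show "(\<lambda>x. \<Sum>(A, B)\<leftarrow>splits vs. iter_dirderiv f A x * iter_dirderiv g B x) differentiable (at x)"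
      using differentiable_sum_list[of "splits vs" "\<lambda>(A, B) y. iter_dirderiv f A y * iter_dirderiv g B y" x]
      by (simp add: split_def)
  qed
  then show ?thesis
    by (rule differentiable_on_cong[rotated]) (rule iter_dirderiv_mult, use assms in auto)
qed

lemma smooth_on_mult:
  fixes f g :: "'a::real_normed_vector \<Rightarrow> 'b::real_normed_algebra"
  assumes "open S" "smooth_on S f" "smooth_on S g"
  shows "smooth_on S (\<lambda>y. f y * g y)"
  unfolding smooth_on_def
  using differentiable_on_iter_dirderiv_mult[OF assms(1)]
    smooth_on_imp_differentiable_on[OF assms(2)] smooth_on_imp_differentiable_on[OF assms(3)]
  by blast

lemma differentiable_powr:
  fixes f :: "'a::real_normed_vector \<Rightarrow> complex"
  assumes "f differentiable (at x)" "f x \<notin> \<real>\<^sub>\<le>\<^sub>0"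
  shows "(\<lambda>y. f y powr c) differentiable (at x)"
proof -
  have "(\<lambda>z. z powr c) differentiable (at (f x))"
    using has_field_derivative_powr[OF assms(2), of c] field_differentiable_def
      field_differentiable_imp_differentiable by blast
  from differentiable_chain_at[OF assms(1) this] show ?thesis
    by (simp add: o_def)
qed

text \<open>Induction on the number of derivatives, simultaneously for all exponents: the first derivative
  of g powr c is g powr (c - 1) times a smooth function.\<close>
lemma smooth_on_powr:
  fixes g :: "'a::real_normed_vector \<Rightarrow> complex"
  assumes "open S" "smooth_on S g" "\<And>x. x \<in> S \<Longrightarrow> g x \<notin> \<real>\<^sub>\<le>\<^sub>0"
  shows "smooth_on S (\<lambda>x. g x powr c)"
proof -
  have g: "g differentiable (at x)" if "x \<in> S" for x
    using smooth_on_imp_differentiable_on[OF assms(2), of "[]"] that assms(1)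
    by (simp add: differentiable_on_eq_differentiable_at)
  have "\<forall>c vs. length vs = n \<longrightarrow> iter_dirderiv (\<lambda>x. g x powr c) vs differentiable_on S" for n
  proof (induction n rule: less_induct)
    case (less n)
    show ?case
    proof (intro allI impI)
      fix c and vs :: "'a list" assume n: "length vs = n"
      show "iter_dirderiv (\<lambda>x. g x powr c) vs differentiable_on S"
      proof (cases vs rule: rev_cases)
        case Nil
        then show ?thesis
          using g assms(3) by (simp add: differentiable_on_eq_differentiable_at[OF assms(1)] differentiable_powr)
      next
        case (snoc vs' v)
        let ?h = "\<lambda>y. c * dirderiv g v y"
        have "smooth_on S ?h"
          using smooth_on_linear[OF bounded_linear_mult_right assms(1)] smooth_on_iter_dirderiv[OF assms(2), of "[v]"]
          by simp
        have "iter_dirderiv (\<lambda>y. g y powr (c - 1) * ?h y) vs' differentiable_on S"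
        proof (rule differentiable_on_iter_dirderiv_mult[OF assms(1)])
          fix ws :: "'a list" assume "length ws \<le> length vs'"
          then show "iter_dirderiv (\<lambda>y. g y powr (c - 1)) ws differentiable_on S \<and>
                     iter_dirderiv ?h ws differentiable_on S"
            using less.IH[of "length ws"] n snoc smooth_on_imp_differentiable_on[OF \<open>smooth_on S ?h\<close>]
            by auto
        qed
        moreover have "dirderiv (\<lambda>x. g x powr c) v y = g y powr (c - 1) * ?h y" if "y \<in> S" for y
          using dirderiv_powr[OF g[OF that] assms(3)[OF that], of c v] by simp
        ultimately show ?thesis
          unfolding snoc iter_dirderiv_append iter_dirderiv.simps
          by (elim differentiable_on_cong[rotated] iter_dirderiv_cong_open[OF assms(1)]) simp
      qed
    qed
  qed
  then show ?thesis
    unfolding smooth_on_def by blast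
qed

definition coord_dirs :: "((real^'n::finite) \<times> (real^'n)) set" where
  "coord_dirs = range dx \<union> range dxi"

text \<open>The number of \<xi>-derivatives among the directions vs (a coordinate direction acts in \<xi>
  exactly when its x-component vanishes).\<close>
definition xi_order :: "((real^'n::finite) \<times> (real^'n)) list \<Rightarrow> nat" where
  "xi_order vs = length (filter (\<lambda>v. fst v = 0) vs)"

lemma xi_order_append: "xi_order (A @ B) = xi_order A + xi_order B"
  unfolding xi_order_def by simp

lemma xi_order_splits:
  assumes "(A, B) \<in> set (splits vs)"
  shows "xi_order A + xi_order B = xi_order vs"
  using arg_cong[OF mset_splits[OF assms], of "\<lambda>M. size (filter_mset (\<lambda>v. fst v = 0) M)"]
  unfolding xi_order_def by (simp flip: mset_filter)

lemma xi_order_dx_dxi: "xi_order (map dx ds @ map dxi es) = length es"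
  unfolding xi_order_def dx_def dxi_def by (simp add: filter_map o_def)

lemma set_splits_subset:
  assumes "(A, B) \<in> set (splits vs)" "set vs \<subseteq> D"
  shows "set A \<subseteq> D" "set B \<subseteq> D"
  using arg_cong[OF mset_splits[OF assms(1)], of set_mset] assms(2) by auto

lemma set_dx_dxi_subset: "set (map dx ds @ map dxi es) \<subseteq> coord_dirs"
  unfolding coord_dirs_def by auto

lemma jbr_ge_1: "1 \<le> jbr \<xi>"
  unfolding jbr_def by simp

lemma jbr_pos [simp]: "0 < jbr \<xi>"
  using jbr_ge_1[of \<xi>] by linarith

lemma jbr_nonneg [simp]: "0 \<le> jbr \<xi>"
  using jbr_ge_1[of \<xi>] by linarith

lemma norm_le_jbr: "norm \<xi> \<le> jbr \<xi>"
  unfolding jbr_def by (simp add: real_le_rsqrt)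

lemma norm_iter_dirderiv_mult_le:
  fixes f g :: "'a::real_normed_vector \<Rightarrow> 'b::real_normed_algebra"
  assumes "open S" "smooth_on S f" "smooth_on S g" "x \<in> S"
  shows "norm (iter_dirderiv (\<lambda>y. f y * g y) ws x) \<le>
           (\<Sum>(A, B)\<leftarrow>splits ws. norm (iter_dirderiv f A x) * norm (iter_dirderiv g B x))"
proof -
  have "norm (\<Sum>(A, B)\<leftarrow>L. iter_dirderiv f A x * iter_dirderiv g B x) \<le>
        (\<Sum>(A, B)\<leftarrow>L. norm (iter_dirderiv f A x) * norm (iter_dirderiv g B x))" for L
    by (induction L) (auto intro!: order_trans[OF norm_triangle_ineq] add_mono norm_mult_ineq)
  moreover have "iter_dirderiv (\<lambda>y. f y * g y) ws x =
                   (\<Sum>(A, B)\<leftarrow>splits ws. iter_dirderiv f A x * iter_dirderiv g B x)"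
    by (rule iter_dirderiv_mult[OF assms(1,4)]) (simp add: assms(2,3) smooth_on_imp_differentiable_on)
  ultimately show ?thesis
    by simp
qed

lemma sum_list_le_uniform:
  fixes N :: "'e \<Rightarrow> 'x \<Rightarrow> real"
  assumes "\<And>e. e \<in> set L \<Longrightarrow> \<exists>c. \<forall>q\<in>X. N e q \<le> c * G q"
  shows "\<exists>c. \<forall>q\<in>X. (\<Sum>e\<leftarrow>L. N e q) \<le> c * G q"
  using assms
proof (induction L)
  case Nil
  show ?case
    by (auto intro: exI[of _ 0])
next
  case (Cons e L)
  obtain c1 c2 where "\<forall>q\<in>X. N e q \<le> c1 * G q" "\<forall>q\<in>X. (\<Sum>e\<leftarrow>L. N e q) \<le> c2 * G q"
    using Cons by (meson list.set_intros)
  then have "\<forall>q\<in>X. (\<Sum>e\<leftarrow>e # L. N e q) \<le> (c1 + c2) * G q"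
    by (auto simp: distrib_right intro: add_mono)
  then show ?case ..
qed

lemma finite_multi_indices: "finite {\<beta>::'n::finite \<Rightarrow> nat. sum \<beta> UNIV \<le> m}"
proof (rule finite_subset)
  show "{\<beta>::'n \<Rightarrow> nat. sum \<beta> UNIV \<le> m} \<subseteq> {\<beta>. \<forall>i. (i \<in> UNIV \<longrightarrow> \<beta> i \<in> {..m}) \<and> (i \<notin> UNIV \<longrightarrow> \<beta> i = 0)}"
  proof (intro subsetI CollectI allI conjI impI)
    fix \<beta> :: "'n \<Rightarrow> nat" and i assume "\<beta> \<in> {\<beta>. sum \<beta> UNIV \<le> m}"
    moreover have "\<beta> i \<le> sum \<beta> UNIV"
      by (rule member_le_sum) auto
    ultimately show "\<beta> i \<in> {..m}"
      by simp
  qed simp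
  show "finite {\<beta>::'n \<Rightarrow> nat. \<forall>i. (i \<in> UNIV \<longrightarrow> \<beta> i \<in> {..m}) \<and> (i \<notin> UNIV \<longrightarrow> \<beta> i = 0)}"
    by (rule finite_set_of_finite_funs) auto
qed

lemma norm_mono_le: "cmod (mono \<xi> \<beta>) \<le> norm \<xi> ^ sum \<beta> UNIV"
proof -
  have "cmod (mono \<xi> \<beta>) = (\<Prod>i\<in>UNIV. \<bar>\<xi> $ i\<bar> ^ \<beta> i)"
    unfolding mono_def by (simp add: prod_norm[symmetric] norm_power)
  also have "\<dots> \<le> (\<Prod>i\<in>UNIV. norm \<xi> ^ \<beta> i)"
    by (rule prod_mono) (auto intro: power_mono component_le_norm_cart)
  also have "\<dots> = norm \<xi> ^ sum \<beta> UNIV"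
    by (simp add: power_sum)
  finally show ?thesis .
qed

lemma jbr_power_eq: "jbr \<xi> ^ (2 * m) = (1 + norm \<xi> ^ 2) ^ m"
  unfolding jbr_def by (simp add: power_mult)

lemma sfun_nonneg [simp]: "0 \<le> sfun a m z x \<xi>"
  unfolding sfun_def by simp

definition inv_Lam :: "real \<Rightarrow> real \<Rightarrow> real" where
  "inv_Lam \<alpha> s = sqrt ((1 + s) / (\<alpha> + s))"

lemma inv_Lam_ge_1: "0 < \<alpha> \<Longrightarrow> \<alpha> \<le> 1 \<Longrightarrow> 0 \<le> s \<Longrightarrow> 1 \<le> inv_Lam \<alpha> s"
  unfolding inv_Lam_def by simp

lemma inv_Lam_square: "0 < \<alpha> \<Longrightarrow> 0 \<le> s \<Longrightarrow> (\<alpha> + s) * inv_Lam \<alpha> s ^ 2 = 1 + s"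
  unfolding inv_Lam_def by simp

lemma Lam_powr_minus: "0 < \<alpha> \<Longrightarrow> 0 \<le> s \<Longrightarrow> Lam \<alpha> s powr (- real k) = inv_Lam \<alpha> s ^ k"
proof -
  assume "0 < \<alpha>" "0 \<le> s"
  then have "0 < Lam \<alpha> s" "inverse (Lam \<alpha> s) = inv_Lam \<alpha> s"
    unfolding Lam_def inv_Lam_def by (simp_all add: real_sqrt_inverse[symmetric])
  then show ?thesis
    using power_inverse[of "Lam \<alpha> s" k] by (simp add: powr_minus powr_realpow)
qed

text \<open>With j = jbr \<xi> ^ m and s = |p - z|^2 this is where ellipticity enters: both sqrt s * j and j^2
  are O((\<alpha> + s) * inv_Lam \<alpha> s ^ k) once k \<ge> 1, resp. k \<ge> 2.\<close>
lemma sqrt_mult_plus_square_le_inv_Lam: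
  fixes \<alpha> s j E :: real
  assumes "0 < \<alpha>" "\<alpha> \<le> 1" "0 \<le> s" "0 \<le> j" "j\<^sup>2 \<le> E * (1 + s)" "1 \<le> k"
  shows "sqrt s * j + (if 2 \<le> k then j\<^sup>2 else 0) \<le> (sqrt E + E) * ((\<alpha> + s) * inv_Lam \<alpha> s ^ k)"
proof -
  let ?i = "inv_Lam \<alpha> s"
  have "0 \<le> E * (1 + s)"
    using assms(5) zero_le_power2[of j] by linarith
  then have E: "0 \<le> E"
    using assms(3) by (auto simp: zero_le_mult_iff)
  have i: "1 \<le> ?i" and as: "0 \<le> \<alpha> + s"
    using assms inv_Lam_ge_1 by auto
  have "s * j\<^sup>2 \<le> E * ((\<alpha> + s) * (1 + s))"
  proof -
    have "s * j\<^sup>2 \<le> s * (E * (1 + s))"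
      using assms(3,5) by (rule mult_left_mono[rotated])
    also have "\<dots> \<le> (\<alpha> + s) * (E * (1 + s))"
      using assms(1,3) E by (intro mult_right_mono) auto
    finally show ?thesis
      by (simp add: mult_ac)
  qed
  have "sqrt s * j = sqrt (s * j\<^sup>2)"
    using assms(4) by (simp add: real_sqrt_mult)
  also have "\<dots> \<le> sqrt (E * ((\<alpha> + s) * (1 + s)))"
    using \<open>s * j\<^sup>2 \<le> _\<close> by (rule real_sqrt_le_mono)
  also have "\<dots> = sqrt E * (sqrt ((\<alpha> + s)\<^sup>2) * sqrt ((1 + s) / (\<alpha> + s)))"
    unfolding real_sqrt_mult[symmetric] using assms(1,3) by (simp add: power2_eq_square)
  also have "\<dots> = sqrt E * ((\<alpha> + s) * ?i)"
    unfolding inv_Lam_def using as by simp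
  also have "\<dots> \<le> sqrt E * ((\<alpha> + s) * ?i ^ k)"
    using power_increasing[OF assms(6) i] as E by (intro mult_left_mono) auto
  finally have sj: "sqrt s * j \<le> sqrt E * ((\<alpha> + s) * ?i ^ k)" .
  have "(if 2 \<le> k then j\<^sup>2 else 0) \<le> E * ((\<alpha> + s) * ?i ^ k)"
  proof (cases "2 \<le> k")
    case True
    have "j\<^sup>2 \<le> E * ((\<alpha> + s) * ?i ^ 2)"
      using assms(5) inv_Lam_square[OF assms(1,3)] by simp
    also have "\<dots> \<le> E * ((\<alpha> + s) * ?i ^ k)"
      using True i as E by (intro mult_left_mono power_increasing) auto
    finally show ?thesis
      using True by simp
  qed (use E as i in simp)
  with sj show ?thesis
    by (simp add: algebra_simps)
qed

text \<open>Since |w - t| \<ge> |Im w| and t \<le> C0 + |w - t|, the factor 1 + 1/|Im w| controls negative powers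
  of |w - t|.\<close>
lemma norm_shift_bounds:
  fixes w :: complex and t C0 :: real
  assumes t: "0 \<le> t" and w: "cmod w \<le> C0" "Im w \<noteq> 0"
  shows "cmod (w - of_real t) \<le> (1 + C0) * (1 + t)"
    and "1 + t \<le> (1 + C0) * (1 + 1 / \<bar>Im w\<bar>) * cmod (w - of_real t)"
proof -
  define u where "u = w - of_real t"
  have C0: "0 \<le> C0"
    using w(1) norm_ge_zero order_trans by blast
  have "cmod u \<le> C0 + t"
    using norm_triangle_ineq4[of w "of_real t"] w(1) t unfolding u_def by simp
  moreover have "(1 + C0) * (1 + t) = C0 + t + (1 + C0 * t)"
    by (simp add: algebra_simps)
  ultimately show "cmod u \<le> (1 + C0) * (1 + t)"
    using mult_nonneg_nonneg[OF C0 t] by linarith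
  have "1 + t \<le> 1 + C0 + cmod u"
    using norm_triangle_ineq4[of w u] w(1) t unfolding u_def by simp
  also have "\<dots> \<le> (1 + C0) * (1 + cmod u)"
    using mult_nonneg_nonneg[OF C0 norm_ge_zero[of u]] by (simp add: algebra_simps)
  also have "\<dots> \<le> (1 + C0) * ((1 + 1 / \<bar>Im w\<bar>) * cmod u)"
    using abs_Im_le_cmod[of u] w(2) C0 unfolding u_def by (intro mult_left_mono) (simp_all add: field_simps)
  finally show "1 + t \<le> (1 + C0) * (1 + 1 / \<bar>Im w\<bar>) * cmod u"
    by (simp add: mult.assoc)
qed

lemma norm_powr_shift_le:
  fixes w :: complex and t l C0 :: real
  assumes t: "0 \<le> t" and w: "cmod w \<le> C0" "Im w \<noteq> 0"
  shows "cmod ((w - of_real t) powr of_real l)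
           \<le> (1 + C0) powr \<bar>l\<bar> * (1 + t) powr l * (1 + 1 / \<bar>Im w\<bar>) ^ nat \<lceil>\<bar>l\<bar>\<rceil>"
proof -
  define u where "u = w - of_real t"
  define Y where "Y = 1 + 1 / \<bar>Im w\<bar>"
  define D where "D = 1 + C0"
  note upper = norm_shift_bounds(1)[OF assms, folded u_def D_def]
  note lower = norm_shift_bounds(2)[OF assms, folded u_def D_def Y_def]
  have D: "1 \<le> D" and Y: "1 \<le> Y"
    using order_trans[OF norm_ge_zero w(1)] unfolding D_def Y_def by simp_all
  have "cmod u powr l \<le> D powr \<bar>l\<bar> * (1 + t) powr l * Y powr \<bar>l\<bar>"
  proof (cases "0 \<le> l")
    case True
    have "cmod u powr l \<le> (D * (1 + t)) powr l"
      using upper True by (intro powr_mono2) auto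
    also have "\<dots> \<le> D powr \<bar>l\<bar> * (1 + t) powr l * Y powr \<bar>l\<bar>"
      using True D t Y by (simp add: powr_mult ge_one_powr_ge_zero)
    finally show ?thesis .
  next
    case False
    have "cmod u powr l \<le> ((1 + t) / (D * Y)) powr l"
      using False lower t D Y by (intro powr_mono2') (auto simp: field_simps)
    also have "\<dots> = D powr \<bar>l\<bar> * (1 + t) powr l * Y powr \<bar>l\<bar>"
      using False t D Y by (simp add: powr_divide powr_mult powr_minus_divide divide_inverse powr_minus inverse_powr)
    finally show ?thesis .
  qed
  also have "\<dots> \<le> D powr \<bar>l\<bar> * (1 + t) powr l * Y ^ nat \<lceil>\<bar>l\<bar>\<rceil>"
  proof (rule mult_left_mono)
    have "Y powr \<bar>l\<bar> \<le> Y powr real (nat \<lceil>\<bar>l\<bar>\<rceil>)"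
      using Y by (intro powr_mono) linarith+
    also have "\<dots> = Y ^ nat \<lceil>\<bar>l\<bar>\<rceil>"
      using Y by (intro powr_realpow) simp
    finally show "Y powr \<bar>l\<bar> \<le> Y ^ nat \<lceil>\<bar>l\<bar>\<rceil>" .
  qed simp
  finally show ?thesis
    unfolding u_def Y_def D_def by (simp add: norm_powr_real_powr')
qed

lemma one_plus_inverse_power_le:
  assumes "0 < y" "y \<le> C"
  shows "(1 + 1 / y) ^ J \<le> (C + 1) ^ J * y powr (- real J)"
proof -
  have "1 + 1 / y \<le> (C + 1) * (1 / y)"
    using assms by (simp add: field_simps)
  then have "(1 + 1 / y) ^ J \<le> ((C + 1) * (1 / y)) ^ J"
    using assms by (intro power_mono) auto
  also have "\<dots> = (C + 1) ^ J * y powr (- real J)"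
    using assms by (simp add: power_mult_distrib powr_minus powr_realpow power_one_over divide_inverse power_inverse)
  finally show ?thesis .
qed

lemma jbr_powr_minus: "jbr \<xi> powr (- real k) = 1 / jbr \<xi> ^ k"
  by (simp add: powr_minus_divide powr_realpow)

section \<open>Symbol estimates\<close>

locale cotangent_chart =
  fixes U :: "(real^'n::finite) set" and K :: "(real^'n) set"
  assumes open_U: "open U" and compact_K: "compact K" and K_subset: "K \<subseteq> U"
begin

abbreviation phase :: "((real^'n) \<times> (real^'n)) set" where
  "phase \<equiv> U \<times> UNIV"

lemma open_phase: "open phase"
  using open_U by (simp add: open_Times)

lemma K_phase: "p \<in> K \<times> UNIV \<Longrightarrow> p \<in> phase"
  using K_subset by auto

definition symbol :: "nat \<Rightarrow> ((real^'n) \<times> (real^'n) \<Rightarrow> complex) \<Rightarrow> bool" where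
  "symbol d f \<longleftrightarrow> smooth_on phase f \<and> (\<forall>ws. set ws \<subseteq> coord_dirs \<longrightarrow>
     (\<exists>C. \<forall>p\<in>K \<times> UNIV. cmod (iter_dirderiv f ws p) \<le> C * jbr (snd p) ^ d / jbr (snd p) ^ xi_order ws))"

lemma symbolI:
  assumes "smooth_on phase f"
    and "\<And>ws. set ws \<subseteq> coord_dirs \<Longrightarrow>
           \<exists>C. \<forall>p\<in>K \<times> UNIV. cmod (iter_dirderiv f ws p) \<le> C * jbr (snd p) ^ d / jbr (snd p) ^ xi_order ws"
  shows "symbol d f"
  using assms unfolding symbol_def by blast

lemma symbol_smooth: "symbol d f \<Longrightarrow> smooth_on phase f"
  unfolding symbol_def by blast

lemma symbol_bound:
  assumes "symbol d f" "set ws \<subseteq> coord_dirs"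
  shows "\<exists>C\<ge>0. \<forall>p\<in>K \<times> UNIV. cmod (iter_dirderiv f ws p) \<le> C * jbr (snd p) ^ d / jbr (snd p) ^ xi_order ws"
proof -
  obtain C where "\<forall>p\<in>K \<times> UNIV. cmod (iter_dirderiv f ws p) \<le> C * jbr (snd p) ^ d / jbr (snd p) ^ xi_order ws"
    using assms unfolding symbol_def by blast
  moreover have "C * jbr \<xi> ^ d / jbr \<xi> ^ k \<le> max C 0 * jbr \<xi> ^ d / jbr \<xi> ^ k" for \<xi> :: "real^'n" and k
    by (intro divide_right_mono mult_right_mono) auto
  ultimately have "\<forall>p\<in>K \<times> UNIV. cmod (iter_dirderiv f ws p) \<le> max C 0 * jbr (snd p) ^ d / jbr (snd p) ^ xi_order ws"
    using order_trans by blast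
  then show ?thesis
    by (intro exI[of _ "max C 0"]) simp
qed

lemma symbol_mono:
  assumes "symbol d f" "d \<le> d'"
  shows "symbol d' f"
proof (rule symbolI)
  show "smooth_on phase f"
    using assms(1) by (rule symbol_smooth)
  fix ws :: "((real^'n) \<times> (real^'n)) list" assume "set ws \<subseteq> coord_dirs"
  with assms(1) obtain C where C: "\<forall>p\<in>K \<times> UNIV.
      cmod (iter_dirderiv f ws p) \<le> C * jbr (snd p) ^ d / jbr (snd p) ^ xi_order ws"
    using symbol_bound by blast
  have "C * jbr \<xi> ^ d \<le> max C 0 * jbr \<xi> ^ d'" for \<xi> :: "real^'n"
    using assms(2) jbr_ge_1[of \<xi>]
    by (intro mult_mono power_increasing) auto
  then have "\<forall>p\<in>K \<times> UNIV. cmod (iter_dirderiv f ws p) \<le> max C 0 * jbr (snd p) ^ d' / jbr (snd p) ^ xi_order ws"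
    using C by (meson divide_right_mono order_trans zero_le_power jbr_pos less_imp_le)
  then show "\<exists>C. \<forall>p\<in>K \<times> UNIV. cmod (iter_dirderiv f ws p) \<le> C * jbr (snd p) ^ d' / jbr (snd p) ^ xi_order ws" ..
qed

lemma symbol_const: "symbol 0 (\<lambda>_. c)"
proof (rule symbolI)
  fix ws :: "((real^'n) \<times> (real^'n)) list"
  show "\<exists>C. \<forall>p\<in>K \<times> UNIV. cmod (iter_dirderiv (\<lambda>_. c) ws p) \<le> C * jbr (snd p) ^ 0 / jbr (snd p) ^ xi_order ws"
  proof (cases ws)
    case Nil
    then show ?thesis
      by (auto simp: xi_order_def intro!: exI[of _ "cmod c"])
  next
    case Cons
    then show ?thesis
      by (auto simp: iter_dirderiv_const_Cons simp del: iter_dirderiv.simps(2) intro!: exI[of _ 0])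
  qed
qed (rule smooth_on_const)

lemma symbol_add:
  assumes "symbol d f" "symbol d g"
  shows "symbol d (\<lambda>p. f p + g p)"
proof (rule symbolI)
  have f: "smooth_on phase f" and g: "smooth_on phase g"
    using assms by (simp_all add: symbol_smooth)
  show "smooth_on phase (\<lambda>p. f p + g p)"
    by (rule smooth_on_add[OF open_phase f g])
  fix ws :: "((real^'n) \<times> (real^'n)) list" assume ws: "set ws \<subseteq> coord_dirs"
  obtain C1 C2 where
    "\<forall>p\<in>K \<times> UNIV. cmod (iter_dirderiv f ws p) \<le> C1 * jbr (snd p) ^ d / jbr (snd p) ^ xi_order ws"
    "\<forall>p\<in>K \<times> UNIV. cmod (iter_dirderiv g ws p) \<le> C2 * jbr (snd p) ^ d / jbr (snd p) ^ xi_order ws"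
    using symbol_bound[OF assms(1) ws] symbol_bound[OF assms(2) ws] by blast
  then have "\<forall>p\<in>K \<times> UNIV. cmod (iter_dirderiv (\<lambda>p. f p + g p) ws p) \<le> (C1 + C2) * jbr (snd p) ^ d / jbr (snd p) ^ xi_order ws"
    using iter_dirderiv_add[OF open_phase f g K_phase]
    by (auto simp: add_divide_distrib distrib_right intro!: order_trans[OF norm_triangle_ineq] add_mono)
  then show "\<exists>C. \<forall>p\<in>K \<times> UNIV. cmod (iter_dirderiv (\<lambda>p. f p + g p) ws p) \<le> C * jbr (snd p) ^ d / jbr (snd p) ^ xi_order ws" ..
qed

lemma symbol_mult:
  assumes "symbol d1 f" "symbol d2 g"
  shows "symbol (d1 + d2) (\<lambda>p. f p * g p)"
proof (rule symbolI)
  have f: "smooth_on phase f" and g: "smooth_on phase g"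
    using assms by (simp_all add: symbol_smooth)
  show "smooth_on phase (\<lambda>p. f p * g p)"
    by (rule smooth_on_mult[OF open_phase f g])
  fix ws :: "((real^'n) \<times> (real^'n)) list" assume ws: "set ws \<subseteq> coord_dirs"
  let ?G = "\<lambda>p::(real^'n) \<times> (real^'n). jbr (snd p) ^ (d1 + d2) / jbr (snd p) ^ xi_order ws"
  let ?S = "\<lambda>p. \<Sum>(A, B)\<leftarrow>splits ws. cmod (iter_dirderiv f A p) * cmod (iter_dirderiv g B p)"
  have "\<exists>c. \<forall>p\<in>K \<times> UNIV. ?S p \<le> c * ?G p"
  proof (rule sum_list_le_uniform, clarify)
    fix A B assume AB: "(A, B) \<in> set (splits ws)"
    obtain C1 C2 where
      C1: "\<forall>p\<in>K \<times> UNIV. cmod (iter_dirderiv f A p) \<le> C1 * jbr (snd p) ^ d1 / jbr (snd p) ^ xi_order A" and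
      C2: "\<forall>p\<in>K \<times> UNIV. cmod (iter_dirderiv g B p) \<le> C2 * jbr (snd p) ^ d2 / jbr (snd p) ^ xi_order B"
      using symbol_bound[OF assms(1) set_splits_subset(1)[OF AB ws]]
        symbol_bound[OF assms(2) set_splits_subset(2)[OF AB ws]] by blast
    have "cmod (iter_dirderiv f A p) * cmod (iter_dirderiv g B p) \<le> (C1 * C2) * ?G p" if "p \<in> K \<times> UNIV" for p
    proof -
      have a: "cmod (iter_dirderiv f A p) \<le> C1 * jbr (snd p) ^ d1 / jbr (snd p) ^ xi_order A"
        and b: "cmod (iter_dirderiv g B p) \<le> C2 * jbr (snd p) ^ d2 / jbr (snd p) ^ xi_order B"
        using C1 C2 that by blast+
      have "cmod (iter_dirderiv f A p) * cmod (iter_dirderiv g B p) \<le>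
            (C1 * jbr (snd p) ^ d1 / jbr (snd p) ^ xi_order A) * (C2 * jbr (snd p) ^ d2 / jbr (snd p) ^ xi_order B)"
        using mult_mono[OF a b order_trans[OF norm_ge_zero a] norm_ge_zero] .
      also have "\<dots> = (C1 * C2) * ?G p"
        unfolding xi_order_splits[OF AB, symmetric] power_add by (simp add: field_simps)
      finally show ?thesis .
    qed
    then show "\<exists>c. \<forall>p\<in>K \<times> UNIV. cmod (iter_dirderiv f A p) * cmod (iter_dirderiv g B p) \<le> c * ?G p"
      by blast
  qed
  then obtain c where c: "\<forall>p\<in>K \<times> UNIV. ?S p \<le> c * ?G p"
    by blast
  have "cmod (iter_dirderiv (\<lambda>p. f p * g p) ws p) \<le> c * jbr (snd p) ^ (d1 + d2) / jbr (snd p) ^ xi_order ws"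
    if "p \<in> K \<times> UNIV" for p
    using order_trans[OF norm_iter_dirderiv_mult_le[OF open_phase f g K_phase[OF that]] c[rule_format, OF that]]
    by simp
  then show "\<exists>C. \<forall>p\<in>K \<times> UNIV. cmod (iter_dirderiv (\<lambda>p. f p * g p) ws p) \<le> C * jbr (snd p) ^ (d1 + d2) / jbr (snd p) ^ xi_order ws"
    by blast
qed

lemma symbol_coeff:
  assumes "smooth_on U a"
  shows "symbol 0 (\<lambda>p. a (fst p))"
proof (rule symbolI)
  have d: "iter_dirderiv a vs differentiable_on U" for vs
    using assms by (rule smooth_on_imp_differentiable_on)
  have "(\<lambda>p. iter_dirderiv a (map fst ws) (fst p)) differentiable (at p)" if "p \<in> phase" for ws p
    using differentiable_chain_at[OF bounded_linear_imp_differentiable[OF bounded_linear_fst],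
        of "iter_dirderiv a (map fst ws)" p] d[of "map fst ws"] that open_U
    by (auto simp: o_def differentiable_on_eq_differentiable_at mem_Times_iff)
  then show "smooth_on phase (\<lambda>p. a (fst p))"
    unfolding smooth_on_def iter_dirderiv_fst
    by (force simp: differentiable_on_eq_differentiable_at[OF open_phase])
  fix ws :: "((real^'n) \<times> (real^'n)) list"
  show "\<exists>C. \<forall>p\<in>K \<times> UNIV. cmod (iter_dirderiv (\<lambda>p. a (fst p)) ws p) \<le> C * jbr (snd p) ^ 0 / jbr (snd p) ^ xi_order ws"
  proof (cases "xi_order ws = 0")
    case False
    then have "0 \<in> set (map fst ws)"
      unfolding xi_order_def by (auto simp: filter_empty_conv image_iff intro: bexI[where x="(0, _)"])
    then show ?thesis
      by (auto simp: iter_dirderiv_fst iter_dirderiv_zero_dir intro: exI[of _ 0])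
  next
    case True
    have "continuous_on K (iter_dirderiv a (map fst ws))"
      using differentiable_imp_continuous_on[OF d] K_subset continuous_on_subset by blast
    then obtain C where "\<And>x. x \<in> K \<Longrightarrow> cmod (iter_dirderiv a (map fst ws) x) \<le> C"
      using continuous_on_compact_bound[OF compact_K] by metis
    then show ?thesis
      using True by (auto simp: iter_dirderiv_fst intro!: exI[of _ C])
  qed
qed

lemma symbol_coord: "symbol 1 (\<lambda>p. complex_of_real (snd p $ i))"
proof -
  let ?f = "\<lambda>p::(real^'n) \<times> (real^'n). complex_of_real (snd p $ i)"
  have lin: "bounded_linear ?f"
    using bounded_linear_compose[OF bounded_linear_of_real
        bounded_linear_compose[OF bounded_linear_vec_nth[of i] bounded_linear_snd]]
    by (simp add: o_def)
  note iter = iter_dirderiv_bounded_linear[OF lin]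
  show ?thesis
  proof (rule symbolI)
    show "smooth_on phase ?f"
      unfolding smooth_on_def iter
      using bounded_linear_imp_differentiable_on[OF lin] by auto
    fix ws :: "((real^'n) \<times> (real^'n)) list" assume ws: "set ws \<subseteq> coord_dirs"
    have "cmod (iter_dirderiv ?f ws p) \<le> 1 * jbr (snd p) ^ 1 / jbr (snd p) ^ xi_order ws" for p
    proof -
      consider "ws = []" | v where "ws = [v]" | "length ws \<ge> 2"
        by (cases ws rule: remdups_adj.cases) auto
      then show ?thesis
      proof cases
        case 1
        then show ?thesis
          using component_le_norm_cart[of "snd p" i] norm_le_jbr[of "snd p"] by (simp add: iter xi_order_def)
      next
        case (2 v)
        then obtain j where "v = dx j \<or> v = dxi j"
          using ws unfolding coord_dirs_def by auto
        moreover have "\<bar>axis j (1::real) $ i\<bar> \<le> 1"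
          by (simp add: axis_def)
        ultimately show ?thesis
          using 2 jbr_ge_1[of "snd p"] by (auto simp: iter dx_def dxi_def xi_order_def)
      next
        case 3
        then have "ws \<noteq> []" "length ws \<noteq> 1"
          by auto
        then show ?thesis
          by (simp add: iter less_imp_le)
      qed
    qed
    then show "\<exists>C. \<forall>p\<in>K \<times> UNIV. cmod (iter_dirderiv ?f ws p) \<le> C * jbr (snd p) ^ 1 / jbr (snd p) ^ xi_order ws"
      by blast
  qed
qed

lemma symbol_sum:
  assumes "finite I" "\<And>i. i \<in> I \<Longrightarrow> symbol d (f i)"
  shows "symbol d (\<lambda>p. \<Sum>i\<in>I. f i p)"
  using assms
proof (induction I rule: finite_induct)
  case empty
  then show ?case
    using symbol_mono[OF symbol_const] by simp
next
  case (insert i I)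
  then show ?case
    using symbol_add[of d "f i" "\<lambda>p. \<Sum>i\<in>I. f i p"] by simp
qed

lemma symbol_prod:
  assumes "finite I" "\<And>i. i \<in> I \<Longrightarrow> symbol (d i) (f i)"
  shows "symbol (\<Sum>i\<in>I. d i) (\<lambda>p. \<Prod>i\<in>I. f i p)"
  using assms
proof (induction I rule: finite_induct)
  case empty
  then show ?case
    using symbol_const by simp
next
  case (insert i I)
  then show ?case
    using symbol_mult[of "d i" "f i" _ "\<lambda>p. \<Prod>i\<in>I. f i p"] by simp
qed

lemma symbol_power:
  assumes "symbol d f"
  shows "symbol (d * k) (\<lambda>p. f p ^ k)"
proof (induction k)
  case 0
  then show ?case
    using symbol_const by simp
next
  case (Suc k)
  then show ?case
    using symbol_mult[OF assms Suc] by (simp add: algebra_simps)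
qed

lemma symbol_symb:
  assumes "\<And>\<beta>. smooth_on U (a \<beta>)"
  shows "symbol m (\<lambda>p. symb a m (fst p) (snd p))"
  unfolding symb_def mono_def
proof (rule symbol_sum[OF finite_multi_indices])
  fix \<beta> :: "'n \<Rightarrow> nat" assume \<beta>: "\<beta> \<in> {\<beta>. sum \<beta> UNIV \<le> m}"
  have "symbol (\<Sum>i\<in>UNIV. \<beta> i) (\<lambda>p. \<Prod>i\<in>UNIV. complex_of_real (snd p $ i) ^ \<beta> i)"
    using symbol_power[OF symbol_coord] by (intro symbol_prod) simp_all
  from symbol_mult[OF symbol_coeff[OF assms[of \<beta>]] this]
  show "symbol m (\<lambda>p. a \<beta> (fst p) * (\<Prod>i\<in>UNIV. complex_of_real (snd p $ i) ^ \<beta> i))"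
    by (rule symbol_mono) (use \<beta> in simp)
qed

end

section \<open>Estimates for the elliptic symbol\<close>

locale elliptic_symbol = cotangent_chart U K for U :: "(real^'n::finite) set" and K +
  fixes a :: "('n \<Rightarrow> nat) \<Rightarrow> real^'n \<Rightarrow> complex" and m :: nat and z :: complex
  assumes smooth_coeffs: "\<And>\<beta>. smooth_on U (a \<beta>)"
    and elliptic: "\<exists>C>0. \<forall>x\<in>K. \<forall>\<xi>. cmod (princ a m x \<xi>) \<ge> norm \<xi> ^ m / C"
begin

definition lower :: "real^'n \<Rightarrow> real^'n \<Rightarrow> complex" where
  "lower x \<xi> = (\<Sum>\<beta>\<in>{\<beta>. sum \<beta> UNIV < m}. a \<beta> x * mono \<xi> \<beta>)"

lemma symb_eq_princ_plus_lower: "symb a m x \<xi> = princ a m x \<xi> + lower x \<xi>"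
proof -
  have split: "{\<beta>::'n \<Rightarrow> nat. sum \<beta> UNIV \<le> m} = {\<beta>. sum \<beta> UNIV = m} \<union> {\<beta>. sum \<beta> UNIV < m}"
    by auto
  have "finite {\<beta>::'n \<Rightarrow> nat. sum \<beta> UNIV = m}" "finite {\<beta>::'n \<Rightarrow> nat. sum \<beta> UNIV < m}"
    by (auto intro: finite_subset[OF _ finite_multi_indices[of m]])
  then show ?thesis
    unfolding symb_def princ_def lower_def split by (rule sum.union_disjoint) auto
qed

lemma lower_bound: "\<exists>A\<ge>0. \<forall>x\<in>K. \<forall>\<xi>. cmod (lower x \<xi>) \<le> A * (1 + norm \<xi>) ^ (m - 1)"
proof -
  let ?B = "{\<beta>::'n \<Rightarrow> nat. sum \<beta> UNIV < m}"
  have "continuous_on K (a \<beta>)" for \<beta>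
    using differentiable_imp_continuous_on[OF smooth_on_imp_differentiable_on[OF smooth_coeffs, of \<beta> "[]"]]
    by (simp add: continuous_on_subset[OF _ K_subset])
  then have "continuous_on K (\<lambda>x. \<Sum>\<beta>\<in>?B. cmod (a \<beta> x))"
    by (intro continuous_intros)
  then obtain A where A: "A \<ge> 0" "\<And>x. x \<in> K \<Longrightarrow> norm (\<Sum>\<beta>\<in>?B. cmod (a \<beta> x)) \<le> A"
    using continuous_on_compact_bound[OF compact_K] by blast
  have "cmod (lower x \<xi>) \<le> A * (1 + norm \<xi>) ^ (m - 1)" if "x \<in> K" for x \<xi>
  proof -
    have "cmod (mono \<xi> \<beta>) \<le> (1 + norm \<xi>) ^ (m - 1)" if "\<beta> \<in> ?B" for \<beta>
    proof -
      have "norm \<xi> ^ sum \<beta> UNIV \<le> (1 + norm \<xi>) ^ sum \<beta> UNIV"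
        by (intro power_mono) auto
      with norm_mono_le[of \<xi> \<beta>] have "cmod (mono \<xi> \<beta>) \<le> (1 + norm \<xi>) ^ sum \<beta> UNIV"
        by linarith
      also have "\<dots> \<le> (1 + norm \<xi>) ^ (m - 1)"
        using that by (intro power_increasing) auto
      finally show ?thesis .
    qed
    then have "(\<Sum>\<beta>\<in>?B. cmod (a \<beta> x * mono \<xi> \<beta>)) \<le> (\<Sum>\<beta>\<in>?B. cmod (a \<beta> x) * (1 + norm \<xi>) ^ (m - 1))"
      by (intro sum_mono) (simp add: norm_mult mult_left_mono)
    then have "cmod (lower x \<xi>) \<le> (\<Sum>\<beta>\<in>?B. cmod (a \<beta> x) * (1 + norm \<xi>) ^ (m - 1))"
      unfolding lower_def by (rule order_trans[OF norm_sum])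
    also have "\<dots> = (\<Sum>\<beta>\<in>?B. cmod (a \<beta> x)) * (1 + norm \<xi>) ^ (m - 1)"
      by (simp add: sum_distrib_right)
    also have "\<dots> \<le> A * (1 + norm \<xi>) ^ (m - 1)"
      using A(2)[OF that] by (intro mult_right_mono) auto
    finally show ?thesis .
  qed
  with A(1) show ?thesis
    by blast
qed

text \<open>For large \<xi> the lower-order terms and z are absorbed by the elliptic principal part.\<close>
lemma symb_minus_z_large_xi:
  assumes "0 < m"
  shows "\<exists>R C. 1 \<le> R \<and> 0 < C \<and> (\<forall>x\<in>K. \<forall>\<xi>. R \<le> norm \<xi> \<longrightarrow> norm \<xi> ^ m \<le> C * cmod (symb a m x \<xi> - z))"
proof -
  obtain C where C: "0 < C" "\<And>x \<xi>. x \<in> K \<Longrightarrow> norm \<xi> ^ m / C \<le> cmod (princ a m x \<xi>)"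
    using elliptic by blast
  obtain A where A: "0 \<le> A" "\<And>x \<xi>. x \<in> K \<Longrightarrow> cmod (lower x \<xi>) \<le> A * (1 + norm \<xi>) ^ (m - 1)"
    using lower_bound by blast
  define R where "R = max 1 (max (4 * C * A * 2 ^ (m - 1)) (4 * C * cmod z))"
  have "norm \<xi> ^ m \<le> (2 * C) * cmod (symb a m x \<xi> - z)" if "x \<in> K" "R \<le> norm \<xi>" for x \<xi>
  proof -
    let ?r = "norm \<xi>"
    have r: "1 \<le> ?r" "4 * C * A * 2 ^ (m - 1) \<le> ?r" "4 * C * cmod z \<le> ?r"
      using that(2) unfolding R_def by linarith+
    have rm: "?r ^ m = ?r * ?r ^ (m - 1)"
      using assms by (simp add: power_eq_if)
    have "A * (1 + ?r) ^ (m - 1) \<le> A * 2 ^ (m - 1) * ?r ^ (m - 1)"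
      using power_mono[of "1 + ?r" "2 * ?r" "m - 1"] r(1) A(1)
      by (simp add: mult.assoc mult_left_mono power_mult_distrib)
    also have "\<dots> \<le> ?r / (4 * C) * ?r ^ (m - 1)"
      using r(2) C(1) by (intro mult_right_mono) (simp_all add: field_simps)
    finally have lower: "cmod (lower x \<xi>) \<le> ?r ^ m / (4 * C)"
      using A(2)[OF that(1), of \<xi>] rm by simp
    have "?r \<le> ?r ^ m"
      using r(1) assms power_increasing[of 1 m ?r] by simp
    then have z: "cmod z \<le> ?r ^ m / (4 * C)"
      using r(3) C(1) by (simp add: field_simps)
    have "cmod (princ a m x \<xi>) \<le> cmod (symb a m x \<xi> - z) + cmod (lower x \<xi>) + cmod z"
      using norm_triangle_ineq[of "symb a m x \<xi> - z - lower x \<xi>" z] norm_triangle_ineq4[of "symb a m x \<xi> - z" "lower x \<xi>"]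
      unfolding symb_eq_princ_plus_lower by simp
    then have "?r ^ m / C \<le> cmod (symb a m x \<xi> - z) + ?r ^ m / (2 * C)"
      using C(2)[OF that(1), of \<xi>] lower z by simp
    then show ?thesis
      using C(1) by (simp add: field_simps)
  qed
  moreover have "1 \<le> R" "0 < 2 * C"
    using C(1) unfolding R_def by simp_all
  ultimately show ?thesis
    by blast
qed

lemma jbr_power_le_sfun: "\<exists>E>0. \<forall>x\<in>K. \<forall>\<xi>. jbr \<xi> ^ (2 * m) \<le> E * (1 + sfun a m z x \<xi>)"
proof (cases "m = 0")
  case True
  then show ?thesis
    by (auto simp: sfun_def intro!: exI[of _ 1])
next
  case False
  then obtain R C where R: "1 \<le> R" and C: "0 < C"
    and large: "\<And>x \<xi>. x \<in> K \<Longrightarrow> R \<le> norm \<xi> \<Longrightarrow> norm \<xi> ^ m \<le> C * cmod (symb a m x \<xi> - z)"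
    using symb_minus_z_large_xi by blast
  define E where "E = 2 ^ m * C\<^sup>2 + (1 + R\<^sup>2) ^ m"
  have "jbr \<xi> ^ (2 * m) \<le> E * (1 + sfun a m z x \<xi>)" if "x \<in> K" for x \<xi>
  proof -
    let ?r = "norm \<xi>" and ?s = "sfun a m z x \<xi>"
    have s: "0 \<le> ?s"
      unfolding sfun_def by simp
    have "jbr \<xi> ^ (2 * m) \<le> 2 ^ m * C\<^sup>2 * ?s + (1 + R\<^sup>2) ^ m"
    proof (cases "R \<le> ?r")
      case True
      have "jbr \<xi> ^ (2 * m) \<le> (2 * ?r\<^sup>2) ^ m"
        unfolding jbr_power_eq using R True mult_mono[of 1 ?r 1 ?r]
        by (intro power_mono) (auto simp: power2_eq_square)
      also have "\<dots> = 2 ^ m * (?r ^ m)\<^sup>2"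
        by (simp add: power_mult_distrib power_mult[symmetric] mult.commute)
      also have "\<dots> \<le> 2 ^ m * (C * cmod (symb a m x \<xi> - z))\<^sup>2"
        using large[OF that True] by (intro mult_left_mono power_mono) auto
      also have "\<dots> = 2 ^ m * C\<^sup>2 * ?s"
        by (simp add: sfun_def power_mult_distrib)
      finally show ?thesis
        by (simp add: add_increasing2)
    next
      case False
      then have "jbr \<xi> ^ (2 * m) \<le> (1 + R\<^sup>2) ^ m"
        unfolding jbr_power_eq by (intro power_mono) (auto intro: power_mono)
      then show ?thesis
        using s by (simp add: add_increasing)
    qed
    also have "\<dots> \<le> E * (1 + ?s)"
      using s unfolding E_def by (simp add: algebra_simps add_increasing)
    finally show ?thesis .
  qed
  moreover have "0 < E"
    unfolding E_def using C by (simp add: add_pos_nonneg)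
  ultimately show ?thesis
    by blast
qed

definition pz :: "(real^'n) \<times> (real^'n) \<Rightarrow> complex" where
  "pz p = symb a m (fst p) (snd p) - z"

abbreviation sp :: "(real^'n) \<times> (real^'n) \<Rightarrow> real" where
  "sp p \<equiv> sfun a m z (fst p) (snd p)"

lemma norm_pz: "cmod (pz p) = sqrt (sp p)"
  unfolding pz_def sfun_def by simp

lemma of_real_sp: "complex_of_real (sp p) = pz p * cnj (pz p)"
  unfolding pz_def sfun_def using complex_norm_square by simp

lemma symbol_pz: "symbol m pz"
proof -
  have "symbol m (\<lambda>p. symb a m (fst p) (snd p) + - z)"
    using symbol_symb[OF smooth_coeffs] symbol_mono[OF symbol_const] by (intro symbol_add) auto
  then show ?thesis
    unfolding pz_def[abs_def] by simp
qed

lemma smooth_sp: "smooth_on phase (\<lambda>p. complex_of_real (sp p))"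
  unfolding of_real_sp
  using smooth_on_mult[OF open_phase _ smooth_on_linear[OF bounded_linear_cnj open_phase]] symbol_smooth[OF symbol_pz]
  by blast

lemma iter_dirderiv_pz_bound:
  assumes "set A \<subseteq> coord_dirs"
  shows "\<exists>C\<ge>0. \<forall>p\<in>K \<times> UNIV. cmod (iter_dirderiv pz A p) \<le>
           C * (if A = [] then sqrt (sp p) else jbr (snd p) ^ m) / jbr (snd p) ^ xi_order A"
proof (cases "A = []")
  case True
  then show ?thesis
    by (auto simp: norm_pz xi_order_def intro!: exI[of _ 1])
next
  case False
  then show ?thesis
    using symbol_bound[OF symbol_pz assms] by simp
qed

text \<open>A derivative of |p - z|^2 = (p - z) * cnj (p - z) falls on both factors only if there are at least two
  of them; otherwise one factor stays undifferentiated and contributes sqrt s.\<close>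
definition sp_weight :: "((real^'n) \<times> (real^'n)) list \<Rightarrow> (real^'n) \<times> (real^'n) \<Rightarrow> real" where
  "sp_weight ws p = (sqrt (sp p) * jbr (snd p) ^ m + (if 2 \<le> length ws then (jbr (snd p) ^ m)\<^sup>2 else 0))
     / jbr (snd p) ^ xi_order ws"

lemma norm_iter_dirderiv_pz_cnj_le:
  assumes AB: "(A, B) \<in> set (splits ws)" and ws: "ws \<noteq> []" "set ws \<subseteq> coord_dirs"
  shows "\<exists>c. \<forall>p\<in>K \<times> UNIV.
           cmod (iter_dirderiv pz A p) * cmod (iter_dirderiv (\<lambda>p. cnj (pz p)) B p) \<le> c * sp_weight ws p"
proof -
  let ?u = "\<lambda>A p. if A = [] then sqrt (sp p) else jbr (snd p) ^ m"
  obtain C1 C2 where C: "0 \<le> C1" "0 \<le> C2"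
    and C1: "\<forall>p\<in>K \<times> UNIV. cmod (iter_dirderiv pz A p) \<le> C1 * ?u A p / jbr (snd p) ^ xi_order A"
    and C2: "\<forall>p\<in>K \<times> UNIV. cmod (iter_dirderiv pz B p) \<le> C2 * ?u B p / jbr (snd p) ^ xi_order B"
    using iter_dirderiv_pz_bound[OF set_splits_subset(1)[OF AB ws(2)]]
      iter_dirderiv_pz_bound[OF set_splits_subset(2)[OF AB ws(2)]] by blast
  have u: "?u A p * ?u B p \<le> sqrt (sp p) * jbr (snd p) ^ m + (if 2 \<le> length ws then (jbr (snd p) ^ m)\<^sup>2 else 0)"
    for p
  proof -
    have "A \<noteq> [] \<or> B \<noteq> []"
      using length_splits[OF AB] ws(1) by auto
    moreover have "A \<noteq> [] \<Longrightarrow> B \<noteq> [] \<Longrightarrow> 2 \<le> length ws"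
      using length_splits[OF AB] by (cases A; cases B) auto
    ultimately show ?thesis
      by (auto simp: power2_eq_square)
  qed
  have "cmod (iter_dirderiv pz A p) * cmod (iter_dirderiv (\<lambda>p. cnj (pz p)) B p) \<le> (C1 * C2) * sp_weight ws p"
    if p: "p \<in> K \<times> UNIV" for p
  proof -
    have "cmod (iter_dirderiv (\<lambda>p. cnj (pz p)) B p) = cmod (iter_dirderiv pz B p)"
      using iter_dirderiv_linear[OF bounded_linear_cnj open_phase symbol_smooth[OF symbol_pz] K_phase[OF p]]
      by simp
    then have a: "cmod (iter_dirderiv pz A p) \<le> C1 * ?u A p / jbr (snd p) ^ xi_order A"
      and b: "cmod (iter_dirderiv (\<lambda>p. cnj (pz p)) B p) \<le> C2 * ?u B p / jbr (snd p) ^ xi_order B"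
      using C1 C2 p by (simp_all only:)
    have "cmod (iter_dirderiv pz A p) * cmod (iter_dirderiv (\<lambda>p. cnj (pz p)) B p)
            \<le> (C1 * ?u A p / jbr (snd p) ^ xi_order A) * (C2 * ?u B p / jbr (snd p) ^ xi_order B)"
      using mult_mono[OF a b order_trans[OF norm_ge_zero a] norm_ge_zero] .
    also have "\<dots> = (C1 * C2) * (?u A p * ?u B p) / jbr (snd p) ^ xi_order ws"
      unfolding xi_order_splits[OF AB, symmetric] power_add by simp
    also have "\<dots> \<le> (C1 * C2) * sp_weight ws p"
      using u[of p] C unfolding sp_weight_def by (simp add: divide_right_mono mult_left_mono)
    finally show ?thesis .
  qed
  then show ?thesis
    by blast
qed

lemma iter_dirderiv_sp_bound:
  assumes "ws \<noteq> []" "set ws \<subseteq> coord_dirs"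
  shows "\<exists>M. \<forall>p\<in>K \<times> UNIV. cmod (iter_dirderiv (\<lambda>p. complex_of_real (sp p)) ws p) \<le> M * sp_weight ws p"
proof -
  let ?S = "\<lambda>p. \<Sum>(A, B)\<leftarrow>splits ws. cmod (iter_dirderiv pz A p) * cmod (iter_dirderiv (\<lambda>p. cnj (pz p)) B p)"
  have smooth: "smooth_on phase pz" "smooth_on phase (\<lambda>p. cnj (pz p))"
    using symbol_smooth[OF symbol_pz] smooth_on_linear[OF bounded_linear_cnj open_phase] by blast+
  have "\<exists>c. \<forall>p\<in>K \<times> UNIV. ?S p \<le> c * sp_weight ws p"
    using norm_iter_dirderiv_pz_cnj_le[OF _ assms] by (intro sum_list_le_uniform) auto
  then obtain c where c: "\<forall>p\<in>K \<times> UNIV. ?S p \<le> c * sp_weight ws p"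
    by blast
  have "cmod (iter_dirderiv (\<lambda>p. complex_of_real (sp p)) ws p) \<le> c * sp_weight ws p" if "p \<in> K \<times> UNIV" for p
    using order_trans[OF norm_iter_dirderiv_mult_le[OF open_phase smooth K_phase[OF that]] c[rule_format, OF that]]
    unfolding of_real_sp .
  then show ?thesis
    by blast
qed

definition s_over :: "real \<Rightarrow> (real^'n) \<times> (real^'n) \<Rightarrow> complex" where
  "s_over \<alpha> p = complex_of_real (sp p / \<alpha>)"

lemma s_over_eq: "s_over \<alpha> = (\<lambda>p. complex_of_real (1 / \<alpha>) * complex_of_real (sp p))"
  by (simp add: fun_eq_iff s_over_def)

lemma smooth_s_over: "smooth_on phase (s_over \<alpha>)"
  unfolding s_over_eq by (rule smooth_on_linear[OF bounded_linear_mult_right open_phase smooth_sp])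

lemma iter_dirderiv_s_over_bound:
  assumes "ws \<noteq> []" "set ws \<subseteq> coord_dirs"
  shows "\<exists>M\<ge>0. \<forall>\<alpha> p. 0 < \<alpha> \<and> \<alpha> \<le> 1 \<and> p \<in> K \<times> UNIV \<longrightarrow> cmod (iter_dirderiv (s_over \<alpha>) ws p)
           \<le> M * ((1 + sp p / \<alpha>) * inv_Lam \<alpha> (sp p) ^ length ws / jbr (snd p) ^ xi_order ws)"
proof -
  obtain M where M: "\<forall>p\<in>K \<times> UNIV. cmod (iter_dirderiv (\<lambda>p. complex_of_real (sp p)) ws p) \<le> M * sp_weight ws p"
    using iter_dirderiv_sp_bound[OF assms] by blast
  obtain E where E: "0 < E" "\<forall>x\<in>K. \<forall>\<xi>. jbr \<xi> ^ (2 * m) \<le> E * (1 + sfun a m z x \<xi>)"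
    using jbr_power_le_sfun by blast
  let ?M = "max M 0 * (sqrt E + E)"
  have "cmod (iter_dirderiv (s_over \<alpha>) ws p)
          \<le> ?M * ((1 + sp p / \<alpha>) * inv_Lam \<alpha> (sp p) ^ length ws / jbr (snd p) ^ xi_order ws)"
    if \<alpha>: "0 < \<alpha>" "\<alpha> \<le> 1" and p: "p \<in> K \<times> UNIV" for \<alpha> p
  proof -
    let ?j = "jbr (snd p) ^ m" and ?k = "jbr (snd p) ^ xi_order ws"
    let ?V = "sqrt (sp p) * ?j + (if 2 \<le> length ws then ?j\<^sup>2 else 0)"
    have V: "0 \<le> ?V"
      by simp
    have "?j\<^sup>2 \<le> E * (1 + sp p)"
      using E(2) p by (auto simp: power_mult[symmetric] mult.commute)
    then have V_le: "?V \<le> (sqrt E + E) * ((\<alpha> + sp p) * inv_Lam \<alpha> (sp p) ^ length ws)"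
      using \<alpha> assms(1) by (intro sqrt_mult_plus_square_le_inv_Lam) (auto simp: Suc_le_eq)
    have "M * sp_weight ws p \<le> max M 0 * ?V / ?k"
      unfolding sp_weight_def times_divide_eq_right[symmetric] by (intro mult_right_mono) auto
    then have sp_le: "cmod (iter_dirderiv (\<lambda>p. complex_of_real (sp p)) ws p) \<le> max M 0 * ?V / ?k"
      by (rule order_trans[OF bspec[OF M p]])
    have "iter_dirderiv (s_over \<alpha>) ws p = complex_of_real (1 / \<alpha>) * iter_dirderiv (\<lambda>p. complex_of_real (sp p)) ws p"
      unfolding s_over_eq
      by (rule iter_dirderiv_linear[OF bounded_linear_mult_right open_phase smooth_sp K_phase[OF p]])
    then have "cmod (iter_dirderiv (s_over \<alpha>) ws p) = (1 / \<alpha>) * cmod (iter_dirderiv (\<lambda>p. complex_of_real (sp p)) ws p)"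
      using \<alpha> by (simp add: norm_divide)
    also have "\<dots> \<le> (1 / \<alpha>) * (max M 0 * ?V / ?k)"
      using sp_le \<alpha> by (intro mult_left_mono) auto
    also have "\<dots> \<le> (1 / \<alpha>) * (max M 0 * ((sqrt E + E) * ((\<alpha> + sp p) * inv_Lam \<alpha> (sp p) ^ length ws)) / ?k)"
      using V_le \<alpha> by (intro mult_left_mono divide_right_mono) auto
    also have "\<dots> = ?M * ((1 + sp p / \<alpha>) * inv_Lam \<alpha> (sp p) ^ length ws / ?k)"
      using \<alpha> by (simp add: field_simps)
    finally show ?thesis .
  qed
  moreover have "0 \<le> ?M"
    using E(1) by simp
  ultimately show ?thesis
    by blast
qed

definition shifted_power :: "real \<Rightarrow> real \<Rightarrow> complex \<Rightarrow> (real^'n) \<times> (real^'n) \<Rightarrow> complex" where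
  "shifted_power l \<alpha> w p = (w - s_over \<alpha> p) powr complex_of_real l"

lemma shift_not_nonpos_Reals: "Im w \<noteq> 0 \<Longrightarrow> w - s_over \<alpha> p \<notin> \<real>\<^sub>\<le>\<^sub>0"
  by (simp add: complex_nonpos_Reals_iff s_over_def)

lemma smooth_shifted_power:
  assumes "Im w \<noteq> 0"
  shows "smooth_on phase (shifted_power l \<alpha> w)"
proof -
  have "smooth_on phase (\<lambda>p. w + - s_over \<alpha> p)"
    using smooth_on_linear[OF bounded_linear_minus[OF bounded_linear_ident] open_phase smooth_s_over]
    by (rule smooth_on_add[OF open_phase smooth_on_const])
  then show ?thesis
    unfolding shifted_power_def[abs_def]
    using smooth_on_powr[OF open_phase _ shift_not_nonpos_Reals[OF assms]] by simp
qed

lemma dirderiv_shifted_power: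
  assumes "Im w \<noteq> 0" "p \<in> phase"
  shows "dirderiv (shifted_power l \<alpha> w) v p =
           shifted_power (l - 1) \<alpha> w p * (- complex_of_real l * dirderiv (s_over \<alpha>) v p)"
proof -
  obtain S' where S': "(s_over \<alpha> has_derivative S') (at p)"
    using smooth_on_imp_differentiable_on[OF smooth_s_over, of \<alpha> "[]"] assms(2) open_phase
    by (auto simp: differentiable_on_eq_differentiable_at differentiable_def)
  then have g: "((\<lambda>p. w - s_over \<alpha> p) has_derivative (\<lambda>h. 0 - S' h)) (at p)"
    by (intro has_derivative_diff has_derivative_const)
  show ?thesis
    unfolding shifted_power_def[abs_def]
    using dirderiv_powr[OF differentiableI[OF g] shift_not_nonpos_Reals[OF assms(1)], of "of_real l" v]
      dirderiv_at[OF g] dirderiv_at[OF S'] by (simp add: algebra_simps)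
qed

definition power_weight :: "real \<Rightarrow> real \<Rightarrow> complex \<Rightarrow> ((real^'n) \<times> (real^'n)) list \<Rightarrow> (real^'n) \<times> (real^'n) \<Rightarrow> real"
  where "power_weight l \<alpha> w vs p = (1 + sp p / \<alpha>) powr l * inv_Lam \<alpha> (sp p) ^ length vs / jbr (snd p) ^ xi_order vs
      * (1 + 1 / \<bar>Im w\<bar>) ^ (nat \<lceil>\<bar>l\<bar>\<rceil> + length vs)"

lemma power_weight_nonneg: "0 < \<alpha> \<Longrightarrow> 0 \<le> power_weight l \<alpha> w vs p"
  unfolding power_weight_def inv_Lam_def by simp

lemma power_weight_split:
  assumes \<alpha>: "0 < \<alpha>" "\<alpha> \<le> 1" and AB: "(A, B) \<in> set (splits vs)"
  shows "power_weight (l - 1) \<alpha> w A p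
           * ((1 + sp p / \<alpha>) * inv_Lam \<alpha> (sp p) ^ length (B @ [v]) / jbr (snd p) ^ xi_order (B @ [v]))
         \<le> power_weight l \<alpha> w (vs @ [v]) p"
proof -
  let ?t = "1 + sp p / \<alpha>" and ?i = "inv_Lam \<alpha> (sp p)" and ?j = "jbr (snd p)" and ?Y = "1 + 1 / \<bar>Im w\<bar>"
  have t: "?t powr (l - 1) * ?t = ?t powr l"
    using \<alpha> by (simp add: powr_diff)
  have len: "length A + length (B @ [v]) = length (vs @ [v])"
    using length_splits[OF AB] by simp
  have xi: "xi_order A + xi_order (B @ [v]) = xi_order (vs @ [v])"
    using xi_order_splits[OF AB] by (simp add: xi_order_append)
  have "nat \<lceil>\<bar>l - 1\<bar>\<rceil> + length A \<le> nat \<lceil>\<bar>l\<bar>\<rceil> + length (vs @ [v])"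
    using length_splits[OF AB] by simp linarith
  then have Y: "?Y ^ (nat \<lceil>\<bar>l - 1\<bar>\<rceil> + length A) \<le> ?Y ^ (nat \<lceil>\<bar>l\<bar>\<rceil> + length (vs @ [v]))"
    by (rule power_increasing) simp
  have "power_weight (l - 1) \<alpha> w A p * (?t * ?i ^ length (B @ [v]) / ?j ^ xi_order (B @ [v]))
          = ?t powr l * ?i ^ length (vs @ [v]) / ?j ^ xi_order (vs @ [v]) * ?Y ^ (nat \<lceil>\<bar>l - 1\<bar>\<rceil> + length A)"
    unfolding power_weight_def t[symmetric] len[symmetric] xi[symmetric] power_add by simp
  also have "\<dots> \<le> power_weight l \<alpha> w (vs @ [v]) p"
    unfolding power_weight_def using Y \<alpha> by (intro mult_left_mono) (auto simp: inv_Lam_def)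
  finally show ?thesis .
qed

lemma power_weight_product_le:
  assumes \<alpha>: "0 < \<alpha>" "\<alpha> \<le> 1" and AB: "(A, B) \<in> set (splits vs)" and MB: "0 \<le> MB"
    and c: "c \<le> BA * power_weight (l - 1) \<alpha> w A p"
    and d: "0 \<le> d" "d \<le> MB * ((1 + sp p / \<alpha>) * inv_Lam \<alpha> (sp p) ^ length (B @ [v]) / jbr (snd p) ^ xi_order (B @ [v]))"
  shows "c * (\<bar>l\<bar> * d) \<le> (max BA 0 * (\<bar>l\<bar> * MB)) * power_weight l \<alpha> w (vs @ [v]) p"
proof -
  let ?R = "(1 + sp p / \<alpha>) * inv_Lam \<alpha> (sp p) ^ length (B @ [v]) / jbr (snd p) ^ xi_order (B @ [v])"
  have wt: "0 \<le> max BA 0 * power_weight (l - 1) \<alpha> w A p"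
    using power_weight_nonneg[OF \<alpha>(1)] by simp
  have c': "c \<le> max BA 0 * power_weight (l - 1) \<alpha> w A p"
    using order_trans[OF c mult_right_mono[OF max.cobounded1 power_weight_nonneg[OF \<alpha>(1)]]] .
  have d': "\<bar>l\<bar> * d \<le> \<bar>l\<bar> * (MB * ?R)"
    using d(2) by (rule mult_left_mono) simp
  have "c * (\<bar>l\<bar> * d) \<le> (max BA 0 * power_weight (l - 1) \<alpha> w A p) * (\<bar>l\<bar> * (MB * ?R))"
    using mult_mono[OF c' d' wt] d(1) by simp
  also have "\<dots> = (max BA 0 * (\<bar>l\<bar> * MB)) * (power_weight (l - 1) \<alpha> w A p * ?R)"
    by (simp add: mult_ac)
  also have "\<dots> \<le> (max BA 0 * (\<bar>l\<bar> * MB)) * power_weight l \<alpha> w (vs @ [v]) p"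
    using power_weight_split[OF \<alpha> AB] MB by (intro mult_left_mono) auto
  finally show ?thesis .
qed

lemma norm_iter_dirderiv_shifted_power_snoc_le:
  assumes "Im w \<noteq> 0" "p \<in> phase"
  shows "cmod (iter_dirderiv (shifted_power l \<alpha> w) (vs @ [v]) p) \<le>
           (\<Sum>(A, B)\<leftarrow>splits vs. cmod (iter_dirderiv (shifted_power (l - 1) \<alpha> w) A p)
                                 * (\<bar>l\<bar> * cmod (iter_dirderiv (s_over \<alpha>) (B @ [v]) p)))"
proof -
  let ?G = "\<lambda>p. - complex_of_real l * dirderiv (s_over \<alpha>) v p"
  have smooth: "smooth_on phase (dirderiv (s_over \<alpha>) v)"
    using smooth_on_iter_dirderiv[OF smooth_s_over, of \<alpha> "[v]"] by simp
  have G: "cmod (iter_dirderiv ?G B p) = \<bar>l\<bar> * cmod (iter_dirderiv (s_over \<alpha>) (B @ [v]) p)" for B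
    using iter_dirderiv_linear[OF bounded_linear_mult_right[of "- complex_of_real l"] open_phase smooth assms(2),
        where vs = B]
    by (simp add: iter_dirderiv_append norm_mult)
  have eq: "iter_dirderiv (shifted_power l \<alpha> w) (vs @ [v]) p =
          iter_dirderiv (\<lambda>y. shifted_power (l - 1) \<alpha> w y * ?G y) vs p"
    unfolding iter_dirderiv_append iter_dirderiv.simps
    by (rule iter_dirderiv_cong_open[OF open_phase assms(2)]) (simp add: dirderiv_shifted_power[OF assms(1)])
  show ?thesis
    unfolding eq
    using norm_iter_dirderiv_mult_le[OF open_phase smooth_shifted_power[OF assms(1), of "l - 1" \<alpha>]
        smooth_on_linear[OF bounded_linear_mult_right[of "- complex_of_real l"] open_phase smooth] assms(2),
        where ws = vs]
    by (simp only: G)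
qed

lemma iter_dirderiv_shifted_power_bound:
  assumes "set vs \<subseteq> coord_dirs"
  shows "\<exists>B. \<forall>\<alpha> w p. 0 < \<alpha> \<and> \<alpha> < 1 \<and> cmod w \<le> C0 \<and> Im w \<noteq> 0 \<and> p \<in> K \<times> UNIV \<longrightarrow>
           cmod (iter_dirderiv (shifted_power l \<alpha> w) vs p) \<le> B * power_weight l \<alpha> w vs p"
  using assms
proof (induction "length vs" arbitrary: vs l rule: less_induct)
  case less
  show ?case
  proof (cases vs rule: rev_cases)
    case Nil
    have "cmod (shifted_power l \<alpha> w p) \<le> (1 + C0) powr \<bar>l\<bar> * power_weight l \<alpha> w [] p"
      if "0 < \<alpha>" "cmod w \<le> C0" "Im w \<noteq> 0" for \<alpha> w p
      using norm_powr_shift_le[of "sp p / \<alpha>" w C0 l] that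
      unfolding shifted_power_def s_over_def power_weight_def by (simp add: xi_order_def mult_ac)
    then show ?thesis
      using Nil by (intro exI[of _ "(1 + C0) powr \<bar>l\<bar>"]) auto
  next
    case (snoc vs' v)
    let ?X = "{(\<alpha>, w, p). 0 < \<alpha> \<and> \<alpha> < 1 \<and> cmod w \<le> C0 \<and> Im w \<noteq> 0 \<and> p \<in> K \<times> UNIV}"
    let ?N = "\<lambda>e (\<alpha>, w, p). case e of (A, B) \<Rightarrow> cmod (iter_dirderiv (shifted_power (l - 1) \<alpha> w) A p)
                                  * (\<bar>l\<bar> * cmod (iter_dirderiv (s_over \<alpha>) (B @ [v]) p))"
    let ?W = "\<lambda>(\<alpha>, w, p). power_weight l \<alpha> w vs p"
    have "\<exists>c. \<forall>q\<in>?X. (\<Sum>e\<leftarrow>splits vs'. ?N e q) \<le> c * ?W q"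
    proof (rule sum_list_le_uniform[of "splits vs'" ?X ?N ?W])
      fix e assume "e \<in> set (splits vs')"
      moreover obtain A B where e: "e = (A, B)"
        by (cases e)
      ultimately have AB: "(A, B) \<in> set (splits vs')"
        by simp
      have "length A < length vs" "set A \<subseteq> coord_dirs"
        using length_splits[OF AB] set_splits_subset(1)[OF AB] less.prems snoc by auto
      then obtain BA where BA: "\<forall>\<alpha> w p. 0 < \<alpha> \<and> \<alpha> < 1 \<and> cmod w \<le> C0 \<and> Im w \<noteq> 0 \<and> p \<in> K \<times> UNIV \<longrightarrow>
          cmod (iter_dirderiv (shifted_power (l - 1) \<alpha> w) A p) \<le> BA * power_weight (l - 1) \<alpha> w A p"
        using less.hyps by blast
      have "B @ [v] \<noteq> []" "set (B @ [v]) \<subseteq> coord_dirs"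
        using set_splits_subset(2)[OF AB] less.prems snoc by auto
      then obtain MB where MB: "0 \<le> MB" "\<forall>\<alpha> p. 0 < \<alpha> \<and> \<alpha> \<le> 1 \<and> p \<in> K \<times> UNIV \<longrightarrow>
          cmod (iter_dirderiv (s_over \<alpha>) (B @ [v]) p)
            \<le> MB * ((1 + sp p / \<alpha>) * inv_Lam \<alpha> (sp p) ^ length (B @ [v]) / jbr (snd p) ^ xi_order (B @ [v]))"
        using iter_dirderiv_s_over_bound by blast
      have "?N (A, B) (\<alpha>, w, p) \<le> (max BA 0 * (\<bar>l\<bar> * MB)) * power_weight l \<alpha> w vs p"
        if "0 < \<alpha> \<and> \<alpha> < 1 \<and> cmod w \<le> C0 \<and> Im w \<noteq> 0 \<and> p \<in> K \<times> UNIV" for \<alpha> w p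
        unfolding snoc using that BA MB
        by (auto intro!: power_weight_product_le[OF _ _ AB])
      then show "\<exists>c. \<forall>q\<in>?X. ?N e q \<le> c * ?W q"
        unfolding e by (intro exI[of _ "max BA 0 * (\<bar>l\<bar> * MB)"]) auto
    qed
    then obtain c where c: "\<forall>q\<in>?X. (\<Sum>e\<leftarrow>splits vs'. ?N e q) \<le> c * ?W q"
      by blast
    have "cmod (iter_dirderiv (shifted_power l \<alpha> w) vs p) \<le> c * power_weight l \<alpha> w vs p"
      if q: "0 < \<alpha> \<and> \<alpha> < 1 \<and> cmod w \<le> C0 \<and> Im w \<noteq> 0 \<and> p \<in> K \<times> UNIV" for \<alpha> w p
    proof -
      have X: "(\<alpha>, w, p) \<in> ?X" and w: "Im w \<noteq> 0" and p: "p \<in> phase"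
        using q K_phase by auto
      from bspec[OF c X] show ?thesis
        unfolding snoc by (simp add: order_trans[OF norm_iter_dirderiv_shifted_power_snoc_le[OF w p]])
    qed
    then show ?thesis
      by blast
  qed
qed

lemma shifted_power_estimate:
  "\<exists>B. \<forall>x\<in>K. \<forall>\<xi>. \<forall>\<alpha>. 0 < \<alpha> \<and> \<alpha> < 1 \<longrightarrow> (\<forall>w. cmod w \<le> C0 \<and> Im w \<noteq> 0 \<longrightarrow>
     cmod (iter_dirderiv (\<lambda>(y, \<eta>). (w - complex_of_real (sfun a m z y \<eta> / \<alpha>)) powr complex_of_real l)
             (map dx ds @ map dxi es) (x, \<xi>))
       \<le> B * (1 + sfun a m z x \<xi> / \<alpha>) powr l * Lam \<alpha> (sfun a m z x \<xi>) powr (- real (length ds + length es))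
           * jbr \<xi> powr (- real (length es)) * \<bar>Im w\<bar> powr (- real (nat \<lceil>\<bar>l\<bar>\<rceil> + (length ds + length es))))"
proof -
  define vs where "vs = map dx ds @ map dxi es"
  define J where "J = nat \<lceil>\<bar>l\<bar>\<rceil> + length vs"
  obtain B where B: "\<forall>\<alpha> w p. 0 < \<alpha> \<and> \<alpha> < 1 \<and> cmod w \<le> C0 \<and> Im w \<noteq> 0 \<and> p \<in> K \<times> UNIV \<longrightarrow>
      cmod (iter_dirderiv (shifted_power l \<alpha> w) vs p) \<le> B * power_weight l \<alpha> w vs p"
    using iter_dirderiv_shifted_power_bound[OF set_dx_dxi_subset] unfolding vs_def by blast
  have "cmod (iter_dirderiv (shifted_power l \<alpha> w) vs (x, \<xi>))
          \<le> (max B 0 * (C0 + 1) ^ J) * (1 + sfun a m z x \<xi> / \<alpha>) powr l * Lam \<alpha> (sfun a m z x \<xi>) powr (- real (length vs))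
              * jbr \<xi> powr (- real (xi_order vs)) * \<bar>Im w\<bar> powr (- real J)"
    if x: "x \<in> K" and \<alpha>: "0 < \<alpha>" "\<alpha> < 1" and w: "cmod w \<le> C0" "Im w \<noteq> 0" for x \<xi> \<alpha> w
  proof -
    let ?s = "sfun a m z x \<xi>"
    let ?P = "(1 + ?s / \<alpha>) powr l * inv_Lam \<alpha> ?s ^ length vs / jbr \<xi> ^ xi_order vs"
    have Y: "(1 + 1 / \<bar>Im w\<bar>) ^ J \<le> (C0 + 1) ^ J * \<bar>Im w\<bar> powr (- real J)"
      using w abs_Im_le_cmod[of w] by (intro one_plus_inverse_power_le) auto
    have "cmod (iter_dirderiv (shifted_power l \<alpha> w) vs (x, \<xi>)) \<le> B * power_weight l \<alpha> w vs (x, \<xi>)"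
      using B x \<alpha> w by simp
    also have "\<dots> \<le> max B 0 * power_weight l \<alpha> w vs (x, \<xi>)"
      using power_weight_nonneg[OF \<alpha>(1)] by (intro mult_right_mono) auto
    also have "\<dots> = max B 0 * (?P * (1 + 1 / \<bar>Im w\<bar>) ^ J)"
      unfolding power_weight_def J_def by simp
    also have "\<dots> \<le> max B 0 * (?P * ((C0 + 1) ^ J * \<bar>Im w\<bar> powr (- real J)))"
      using Y \<alpha> by (intro mult_left_mono) (auto simp: inv_Lam_def)
    also have "\<dots> = (max B 0 * (C0 + 1) ^ J) * (1 + ?s / \<alpha>) powr l * Lam \<alpha> ?s powr (- real (length vs))
                     * jbr \<xi> powr (- real (xi_order vs)) * \<bar>Im w\<bar> powr (- real J)"
      using \<alpha> by (simp add: Lam_powr_minus jbr_powr_minus)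
    finally show ?thesis .
  qed
  moreover have "(\<lambda>(y, \<eta>). (w - complex_of_real (sfun a m z y \<eta> / \<alpha>)) powr complex_of_real l) = shifted_power l \<alpha> w"
    for \<alpha> w
    by (simp add: fun_eq_iff shifted_power_def s_over_def)
  ultimately show ?thesis
    unfolding vs_def J_def xi_order_dx_dxi by (intro exI[of _ "max B 0 * (C0 + 1) ^ J"]) (simp add: J_def vs_def)
qed

end

theorem proposition4p2:
  fixes a :: "('n::finite \<Rightarrow> nat) \<Rightarrow> real^'n \<Rightarrow> complex"
    and m :: nat and U :: "(real^'n) set" and z :: complex and C0 :: real
  assumes "open U"
    and "\<forall>\<beta>. smooth_on U (a \<beta>)"
    and "\<forall>K. compact K \<and> K \<subseteq> U \<longrightarrow>
           (\<exists>C>0. \<forall>x\<in>K. \<forall>\<xi>. cmod (princ a m x \<xi>) \<ge> norm \<xi> ^ m / C)"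
  shows "\<exists>\<alpha>0>0. \<forall>(l::real) (ds::'n list) (es::'n list). \<exists>J::nat.
           \<forall>K. compact K \<and> K \<subseteq> U \<longrightarrow>
             (\<exists>B. \<forall>x\<in>K. \<forall>\<xi>. \<forall>\<alpha>. 0 < \<alpha> \<and> \<alpha> < \<alpha>0 \<longrightarrow>
               (\<forall>w. cmod w \<le> C0 \<and> Im w \<noteq> 0 \<longrightarrow>
                 cmod (iter_dirderiv
                    (\<lambda>(y, \<eta>). (w - complex_of_real (sfun a m z y \<eta> / \<alpha>)) powr complex_of_real l)
                    (map dx ds @ map dxi es) (x, \<xi>))
                 \<le> B * (1 + sfun a m z x \<xi> / \<alpha>) powr l
                     * Lam \<alpha> (sfun a m z x \<xi>) powr (- real (length ds + length es))
                     * jbr \<xi> powr (- real (length es))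
                     * \<bar>Im w\<bar> powr (- real J)))"
proof -
  have "elliptic_symbol U K a m" if "compact K" "K \<subseteq> U" for K
    using assms that by unfold_locales auto
  note estimate = elliptic_symbol.shifted_power_estimate[OF this]
  show ?thesis
    by (intro exI[of _ "1::real"] conjI zero_less_one allI, rule exI, intro allI impI, erule conjE)
       (rule estimate)
qed

end
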